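(* Let $V$ be an $n$-dimensional Euclidean space, $1\le p\le n$, let $\theta$ be a quadratic form on $V$ and $\tau=\tau_i\omega^i\in V^*$ a $1$-form such that $\theta-\tau\otimes\tau$ is $p$-positive semi-definite. Then for every $(p-1)$-form $\xi$ on $V$ one has $\tau\wedge\xi\in\mathrm{Im}F_\theta$ (with $F_\theta$ acting on $p$-forms), and for every $p$-form $f\in\mathrm{Im}F_\theta$, $$\langle F_\theta^{-1}f,\tau\wedge\xi\rangle\le\langle F_\theta^{-1}f,f\rangle^{1/2}|\xi| .$$ In particular $\langle F_\theta^{-1}(\tau\wedge\xi),\tau\wedge\xi\rangle\le|\xi|^2$.
   Context: Let $e_1,\dots,e_n$ be an orthonormal basis of $V$ with dual basis $\omega^1,\dots,\omega^n$; summation over repeated indices. A quadratic form (symmetric bilinear form) $\theta=\theta_{ij}\omega^i\otimes\omega^j$ is called $p$-positive definite (resp. $p$-positive semi-definite) if the sum of any $p$ of the eigenvalues of the symmetric matrix $(\theta_{ij})$ (counted with multiplicity) is positive (resp. nonnegative). For such $\theta$, $F_\theta$ denotes the self-adjoint operator on $p$-forms $F_\theta g=\theta_{jk}\,\omega^k\wedge(e_j\lrcorner g)$, where $\lrcorner$ is interior product. For a self-adjoint operator $F$ on $\Lambda^pV^*$ one has $\Lambda^pV^*=\ker F\oplus\mathrm{Im}F$, and $F^{-1}$ denotes $(F|_{\mathrm{Im}F})^{-1}:\mathrm{Im}F\to\mathrm{Im}F$ ($F$ need not be invertible). *)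

theory Defs
  imports "HOL-Analysis.Analysis" "Jordan_Normal_Form.Char_Poly"
begin

text \<open>Exterior forms on V = R^n with orthonormal basis e_0,...,e_(n-1), dual basis w^0,...,w^(n-1).
  A p-form is represented by its coefficients with respect to the basis
  e^I = w^(i_1) wedge ... wedge w^(i_p), i_1 < ... < i_p, indexed by the set I.\<close>

type_synonym form = "nat set \<Rightarrow> real"

definition forms :: "nat \<Rightarrow> nat \<Rightarrow> form set" where
  "forms n p = {f. \<forall>I. f I \<noteq> 0 \<longrightarrow> I \<subseteq> {..<n} \<and> card I = p}"

definition idx :: "nat \<Rightarrow> nat \<Rightarrow> nat set set" where
  "idx n p = {I. I \<subseteq> {..<n} \<and> card I = p}"

definition form_inner :: "nat \<Rightarrow> nat \<Rightarrow> form \<Rightarrow> form \<Rightarrow> real" where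
  "form_inner n p f g = (\<Sum>I\<in>idx n p. f I * g I)"

definition form_norm :: "nat \<Rightarrow> nat \<Rightarrow> form \<Rightarrow> real" where
  "form_norm n p f = sqrt (form_inner n p f f)"

text \<open>Sign of moving w^k past the w^i with i in I, i < k.\<close>
definition sgn_pos :: "nat \<Rightarrow> nat set \<Rightarrow> real" where
  "sgn_pos k I = (-1) ^ card {i\<in>I. i < k}"

definition wedge1 :: "nat \<Rightarrow> (nat \<Rightarrow> real) \<Rightarrow> form \<Rightarrow> form" where
  "wedge1 n \<tau> \<xi> = (\<lambda>J. \<Sum>k\<in>J \<inter> {..<n}. \<tau> k * sgn_pos k (J - {k}) * \<xi> (J - {k}))"

definition interior :: "nat \<Rightarrow> form \<Rightarrow> form" where
  "interior j g = (\<lambda>I. if j \<in> I then 0 else sgn_pos j I * g (insert j I))"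

definition F_op :: "nat \<Rightarrow> (nat \<Rightarrow> nat \<Rightarrow> real) \<Rightarrow> form \<Rightarrow> form" where
  "F_op n \<theta> g = (\<lambda>J. \<Sum>j<n. wedge1 n (\<lambda>k. \<theta> j k) (interior j g) J)"

definition F_img :: "nat \<Rightarrow> nat \<Rightarrow> (nat \<Rightarrow> nat \<Rightarrow> real) \<Rightarrow> form set" where
  "F_img n p \<theta> = F_op n \<theta> ` forms n p"

definition F_inv :: "nat \<Rightarrow> nat \<Rightarrow> (nat \<Rightarrow> nat \<Rightarrow> real) \<Rightarrow> form \<Rightarrow> form" where
  "F_inv n p \<theta> f = (THE g. g \<in> F_img n p \<theta> \<and> F_op n \<theta> g = f)"

definition qf_mat :: "nat \<Rightarrow> (nat \<Rightarrow> nat \<Rightarrow> real) \<Rightarrow> real mat" where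
  "qf_mat n \<theta> = mat n n (\<lambda>(i, j). \<theta> i j)"

definition eigvals :: "nat \<Rightarrow> (nat \<Rightarrow> nat \<Rightarrow> real) \<Rightarrow> real multiset" where
  "eigvals n \<theta> = proots (char_poly (qf_mat n \<theta>))"

definition p_pos_semidef :: "nat \<Rightarrow> nat \<Rightarrow> (nat \<Rightarrow> nat \<Rightarrow> real) \<Rightarrow> bool" where
  "p_pos_semidef n p \<theta> =
     (\<forall>M. M \<subseteq># eigvals n \<theta> \<and> size M = p \<longrightarrow> 0 \<le> sum_mset M)"

end

theory Submission
  imports Defs
begin

text \<open>
  Write \<open>G\<^sub>j\<^sub>k = \<langle>e\<^sub>j \<lrcorner> g, e\<^sub>k \<lrcorner> g\<rangle>\<close> for a \<open>p\<close>-form \<open>g\<close>. Then \<open>\<langle>F\<^sub>\<theta> g, g\<rangle> = \<Sum> \<theta>\<^sub>j\<^sub>k G\<^sub>j\<^sub>k\<close> and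
  \<open>|\<tau> \<lrcorner> g|\<^sup>2 = \<Sum> \<tau>\<^sub>j \<tau>\<^sub>k G\<^sub>j\<^sub>k\<close>, so the key inequality \<open>|\<tau> \<lrcorner> g|\<^sup>2 \<le> \<langle>F\<^sub>\<theta> g, g\<rangle>\<close> says
  \<open>tr ((\<theta> - \<tau> \<otimes> \<tau>) G) \<ge> 0\<close>. The matrix \<open>G\<close> is positive semi-definite, bounded by \<open>|g|\<^sup>2\<close>
  (by the anticommutation of wedge and interior product) and has trace \<open>p |g|\<^sup>2\<close>. In an
  eigenbasis of \<open>\<theta> - \<tau> \<otimes> \<tau>\<close> its diagonal entries are thus weights in \<open>[0, |g|\<^sup>2]\<close> summing
  to \<open>p |g|\<^sup>2\<close>, and the trace is at least \<open>|g|\<^sup>2\<close> times the sum of the \<open>p\<close> smallest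
  eigenvalues, which is nonnegative.

  As \<open>F\<^sub>\<theta>\<close> is symmetric, its image is the orthogonal complement of its kernel. If
  \<open>F\<^sub>\<theta> h = 0\<close>, the key inequality gives \<open>\<tau> \<lrcorner> h = 0\<close>, hence \<open>\<langle>\<tau> \<and> \<xi>, h\<rangle> = \<langle>\<xi>, \<tau> \<lrcorner> h\<rangle> = 0\<close>,
  so \<open>\<tau> \<and> \<xi>\<close> lies in the image. For \<open>h = F\<^sub>\<theta>\<^sup>-\<^sup>1 f\<close>, Cauchy-Schwarz and the key inequality give
  \<open>\<langle>h, \<tau> \<and> \<xi>\<rangle> = \<langle>\<xi>, \<tau> \<lrcorner> h\<rangle> \<le> |\<xi>| \<langle>F\<^sub>\<theta> h, h\<rangle>\<^sup>1\<^sup>/\<^sup>2 = |\<xi>| \<langle>h, f\<rangle>\<^sup>1\<^sup>/\<^sup>2\<close>.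

  Both spectral arguments use the spectral theorem for real symmetric matrices, proved by
  deflating one eigenvector at a time with a Householder reflection.
\<close>

section \<open>Orthogonal diagonalization of real symmetric matrices\<close>

definition orthogonal_matrix_on :: "'a set \<Rightarrow> ('a \<Rightarrow> 'a \<Rightarrow> real) \<Rightarrow> bool" where
  "orthogonal_matrix_on K U \<longleftrightarrow>
     (\<forall>i\<in>K. \<forall>j\<in>K. (\<Sum>m\<in>K. U m i * U m j) = of_bool (i = j)) \<and>
     (\<forall>i\<in>K. \<forall>j\<in>K. (\<Sum>m\<in>K. U i m * U j m) = of_bool (i = j))"

lemma orthogonal_matrix_on_cols:
  "orthogonal_matrix_on K U \<Longrightarrow> i \<in> K \<Longrightarrow> j \<in> K \<Longrightarrow> (\<Sum>m\<in>K. U m i * U m j) = of_bool (i = j)"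
  unfolding orthogonal_matrix_on_def by blast

lemma orthogonal_matrix_on_rows:
  "orthogonal_matrix_on K U \<Longrightarrow> i \<in> K \<Longrightarrow> j \<in> K \<Longrightarrow> (\<Sum>m\<in>K. U i m * U j m) = of_bool (i = j)"
  unfolding orthogonal_matrix_on_def by blast

lemma sum_delta_left: "finite K \<Longrightarrow> i \<in> K \<Longrightarrow> (\<Sum>k\<in>K. of_bool (i = k) * f k) = (f i :: real)"
  by simp

lemma sum_delta_right: "finite K \<Longrightarrow> j \<in> K \<Longrightarrow> (\<Sum>k\<in>K. f k * of_bool (k = j)) = (f j :: real)"
  by simp

lemma sum_sum_mult_sums:
  "(\<Sum>m\<in>M. (\<Sum>k\<in>F. x k * y k m) * (\<Sum>q\<in>F. z q * w q m))
   = (\<Sum>k\<in>F. \<Sum>q\<in>F. x k * z q * (\<Sum>m\<in>M. y k m * w q m :: real))"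
proof -
  have "(\<Sum>m\<in>M. (\<Sum>k\<in>F. x k * y k m) * (\<Sum>q\<in>F. z q * w q m))
      = (\<Sum>m\<in>M. \<Sum>k\<in>F. \<Sum>q\<in>F. x k * z q * (y k m * w q m))"
    by (simp add: sum_product mult_ac)
  also have "\<dots> = (\<Sum>k\<in>F. \<Sum>m\<in>M. \<Sum>q\<in>F. x k * z q * (y k m * w q m))"
    by (rule sum.swap)
  also have "\<dots> = (\<Sum>k\<in>F. \<Sum>q\<in>F. \<Sum>m\<in>M. x k * z q * (y k m * w q m))"
    by (intro sum.cong refl sum.swap)
  finally show ?thesis
    by (simp add: sum_distrib_left)
qed

lemma sum_sum_bilinear_diagonal:
  "(\<Sum>k\<in>F. \<Sum>q\<in>F. x k * (\<Sum>m\<in>M. c m * y k m * z q m) * w q)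
   = (\<Sum>m\<in>M. c m * (\<Sum>k\<in>F. x k * y k m) * (\<Sum>q\<in>F. w q * z q m :: real))"
proof -
  have "(\<Sum>k\<in>F. \<Sum>q\<in>F. x k * (\<Sum>m\<in>M. c m * y k m * z q m) * w q)
      = (\<Sum>k\<in>F. \<Sum>q\<in>F. \<Sum>m\<in>M. c m * (x k * y k m) * (z q m * w q))"
    by (simp add: sum_distrib_left sum_distrib_right mult_ac)
  also have "\<dots> = (\<Sum>k\<in>F. \<Sum>m\<in>M. \<Sum>q\<in>F. c m * (x k * y k m) * (z q m * w q))"
    by (intro sum.cong refl sum.swap)
  also have "\<dots> = (\<Sum>m\<in>M. \<Sum>k\<in>F. \<Sum>q\<in>F. c m * (x k * y k m) * (z q m * w q))"
    by (rule sum.swap)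
  finally show ?thesis
    by (simp add: sum_distrib_left sum_distrib_right mult_ac)
qed

lemma orthogonal_matrix_on_mult:
  assumes K: "finite K" and H: "orthogonal_matrix_on K H" and W: "orthogonal_matrix_on K W"
  shows "orthogonal_matrix_on K (\<lambda>i m. \<Sum>k\<in>K. H i k * W k m)"
  unfolding orthogonal_matrix_on_def
proof (intro conjI ballI)
  fix m m' assume "m \<in> K" "m' \<in> K"
  have "(\<Sum>i\<in>K. (\<Sum>k\<in>K. H i k * W k m) * (\<Sum>q\<in>K. H i q * W q m'))
      = (\<Sum>i\<in>K. (\<Sum>k\<in>K. W k m * H i k) * (\<Sum>q\<in>K. W q m' * H i q))"
    by (simp add: mult.commute)
  also have "\<dots> = (\<Sum>k\<in>K. \<Sum>q\<in>K. W k m * W q m' * of_bool (k = q))"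
    unfolding sum_sum_mult_sums using orthogonal_matrix_on_cols[OF H] by (simp cong: sum.cong)
  also have "\<dots> = of_bool (m = m')"
    using K \<open>m \<in> K\<close> \<open>m' \<in> K\<close> orthogonal_matrix_on_cols[OF W] by simp
  finally show "(\<Sum>i\<in>K. (\<Sum>k\<in>K. H i k * W k m) * (\<Sum>q\<in>K. H i q * W q m')) = of_bool (m = m')" .
next
  fix i j assume "i \<in> K" "j \<in> K"
  have "(\<Sum>m\<in>K. (\<Sum>k\<in>K. H i k * W k m) * (\<Sum>q\<in>K. H j q * W q m))
      = (\<Sum>k\<in>K. \<Sum>q\<in>K. H i k * H j q * of_bool (k = q))"
    unfolding sum_sum_mult_sums using orthogonal_matrix_on_rows[OF W] by (simp cong: sum.cong)
  also have "\<dots> = of_bool (i = j)"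
    using K \<open>i \<in> K\<close> \<open>j \<in> K\<close> orthogonal_matrix_on_rows[OF H] by simp
  finally show "(\<Sum>m\<in>K. (\<Sum>k\<in>K. H i k * W k m) * (\<Sum>q\<in>K. H j q * W q m)) = of_bool (i = j)" .
qed

lemma orthogonal_matrix_on_conj_cancel:
  assumes K: "finite K" and H: "orthogonal_matrix_on K H" and ij: "i \<in> K" "j \<in> K"
  shows "(\<Sum>k\<in>K. \<Sum>q\<in>K. H i k * (\<Sum>r\<in>K. \<Sum>s\<in>K. H r k * A r s * H s q) * H j q) = A i j"
proof -
  have "(\<Sum>k\<in>K. \<Sum>q\<in>K. H i k * (\<Sum>r\<in>K. \<Sum>s\<in>K. H r k * A r s * H s q) * H j q)
      = (\<Sum>k\<in>K. \<Sum>q\<in>K. \<Sum>r\<in>K. \<Sum>s\<in>K. A r s * (H i k * H r k) * (H s q * H j q))"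
    by (simp add: sum_distrib_left sum_distrib_right mult_ac)
  also have "\<dots> = (\<Sum>r\<in>K. \<Sum>k\<in>K. \<Sum>q\<in>K. \<Sum>s\<in>K. A r s * (H i k * H r k) * (H s q * H j q))"
    by (subst sum.swap) (rule sum.cong[OF refl], rule sum.swap)
  also have "\<dots> = (\<Sum>r\<in>K. \<Sum>k\<in>K. \<Sum>s\<in>K. \<Sum>q\<in>K. A r s * (H i k * H r k) * (H s q * H j q))"
    by (rule sum.cong[OF refl], rule sum.cong[OF refl], rule sum.swap)
  also have "\<dots> = (\<Sum>r\<in>K. \<Sum>s\<in>K. \<Sum>k\<in>K. \<Sum>q\<in>K. A r s * (H i k * H r k) * (H s q * H j q))"
    by (rule sum.cong[OF refl], rule sum.swap)
  also have "\<dots> = (\<Sum>r\<in>K. \<Sum>s\<in>K. A r s * (\<Sum>k\<in>K. H i k * H r k) * (\<Sum>q\<in>K. H s q * H j q))"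
    by (simp add: sum_distrib_left sum_distrib_right mult_ac)
  also have "\<dots> = (\<Sum>r\<in>K. of_bool (r = i) * (\<Sum>s\<in>K. of_bool (s = j) * A r s))"
    using ij orthogonal_matrix_on_rows[OF H]
    by (simp add: sum_distrib_left sum_distrib_right mult_ac eq_commute[of r i for r] cong: sum.cong)
  also have "\<dots> = A i j"
    using K ij by simp
  finally show ?thesis .
qed

lemma diagonalization_insert:
  fixes B U :: "'a \<Rightarrow> 'a \<Rightarrow> real"
  assumes F: "finite F" "a \<notin> F"
    and B_row: "\<And>q. q \<in> F \<Longrightarrow> B a q = 0" and B_col: "\<And>q. q \<in> F \<Longrightarrow> B q a = 0"
    and U: "orthogonal_matrix_on F U"
    and dec: "\<And>i j. i \<in> F \<Longrightarrow> j \<in> F \<Longrightarrow> B i j = (\<Sum>m\<in>F. l m * U i m * U j m)"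
  obtains U' where "orthogonal_matrix_on (insert a F) U'"
    and "\<And>i j. i \<in> insert a F \<Longrightarrow> j \<in> insert a F \<Longrightarrow>
           B i j = (\<Sum>m\<in>insert a F. (l(a := B a a)) m * U' i m * U' j m)"
proof -
  define U' where "U' i m = (if i = a \<or> m = a then of_bool (i = m) else U i m)" for i m
  have U'F: "U' i m = U i m" if "i \<in> F" "m \<in> F" for i m
    using that F(2) unfolding U'_def by auto
  have U'a: "U' a m = 0" "U' m a = 0" if "m \<in> F" for m
    using that F(2) unfolding U'_def by auto
  have U'aa: "U' a a = 1"
    unfolding U'_def by simp
  have sum_F: "(\<Sum>m\<in>F. f m * U' a m) = 0" "(\<Sum>m\<in>F. U' a m * f m) = 0" for f :: "'a \<Rightarrow> real"
    using U'a by (auto intro!: sum.neutral)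
  have "orthogonal_matrix_on (insert a F) U'"
    unfolding orthogonal_matrix_on_def
    using F orthogonal_matrix_on_cols[OF U] orthogonal_matrix_on_rows[OF U] sum_F U'a U'aa
    by (auto simp: U'F cong: sum.cong)
  moreover have "B i j = (\<Sum>m\<in>insert a F. (l(a := B a a)) m * U' i m * U' j m)"
    if "i \<in> insert a F" "j \<in> insert a F" for i j
  proof -
    have "(\<Sum>m\<in>F. (l(a := B a a)) m * U' i m * U' j m) = (\<Sum>m\<in>F. l m * U' i m * U' j m)"
      using F(2) by (intro sum.cong) auto
    moreover have "(\<Sum>m\<in>F. l m * U' a m * U' j m) = 0"
      using U'a by (auto intro!: sum.neutral)
    moreover have "(\<Sum>m\<in>F. l m * U' i m * U' a m) = 0"
      using U'a by (auto intro!: sum.neutral)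
    ultimately show ?thesis
      using that F B_row B_col dec U'a U'aa by (auto simp: U'F cong: sum.cong)
  qed
  ultimately show ?thesis
    by (rule that)
qed

lemma complex_matrix_has_eigenvector:
  fixes B :: "nat \<Rightarrow> nat \<Rightarrow> complex"
  assumes "0 < N"
  shows "\<exists>z x. (\<exists>i<N. x i \<noteq> 0) \<and> (\<forall>i<N. (\<Sum>j<N. B i j * x j) = z * x i)"
proof -
  define C where "C = mat N N (\<lambda>(i, j). B i j)"
  have C: "C \<in> carrier_mat N N"
    unfolding C_def by simp
  obtain zs where cp: "char_poly C = (\<Prod>z\<leftarrow>zs. [:- z, 1:])" and "length zs = N"
    using char_poly_factorized[OF C] by blast
  then obtain z zs' where "zs = z # zs'"
    using assms by (cases zs) auto
  then have "eigenvalue C z"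
    using eigenvalue_root_char_poly[OF C] cp by simp
  then obtain v where "eigenvector C v z"
    unfolding eigenvalue_def by blast
  then have v: "v \<in> carrier_vec N" and v0: "v \<noteq> 0\<^sub>v N" and Cv: "C *\<^sub>v v = z \<cdot>\<^sub>v v"
    using C unfolding eigenvector_def by auto
  have "(\<Sum>j<N. B i j * v $ j) = z * v $ i" if "i < N" for i
    using arg_cong[OF Cv, of "\<lambda>w. w $ i"] that v
    by (simp add: C_def scalar_prod_def row_def lessThan_atLeast0)
  moreover have "\<exists>i<N. v $ i \<noteq> 0"
    using v0 v by (metis eq_vecI carrier_vecD index_zero_vec(1,2))
  ultimately show ?thesis
    by blast
qed

lemma complex_matrix_has_eigenvector_on:
  fixes B :: "'a \<Rightarrow> 'a \<Rightarrow> complex"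
  assumes K: "finite K" "K \<noteq> {}"
  shows "\<exists>z x. (\<exists>i\<in>K. x i \<noteq> 0) \<and> (\<forall>i\<in>K. (\<Sum>j\<in>K. B i j * x j) = z * x i)"
proof -
  obtain e where e: "bij_betw e {..<card K} K"
    using ex_bij_betw_nat_finite[OF K(1)] unfolding lessThan_atLeast0 by blast
  have reindex: "(\<Sum>j\<in>K. f j) = (\<Sum>j<card K. f (e j))" for f :: "'a \<Rightarrow> complex"
    using sum.reindex_bij_betw[OF e, of f] by simp
  obtain z y where y0: "\<exists>i<card K. y i \<noteq> 0"
    and y: "\<forall>i<card K. (\<Sum>j<card K. B (e i) (e j) * y j) = z * y i"
    using complex_matrix_has_eigenvector[of "card K" "\<lambda>i j. B (e i) (e j)"] K
    by (auto simp: card_gt_0_iff)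
  define x where "x k = y (inv_into {..<card K} e k)" for k
  have xe: "x (e i) = y i" if "i < card K" for i
    using bij_betw_inv_into_left[OF e] that by (simp add: x_def)
  have "(\<Sum>j\<in>K. B k j * x j) = z * x k" if k: "k \<in> K" for k
  proof -
    obtain i where "i < card K" "k = e i"
      using e k by (auto simp: bij_betw_def)
    then show ?thesis
      using y xe unfolding reindex by simp
  qed
  moreover have "\<exists>i\<in>K. x i \<noteq> 0"
    using y0 xe e by (force simp: bij_betw_def)
  ultimately show ?thesis
    by blast
qed

lemma symmetric_matrix_eigenvalue_real:
  fixes A :: "'a \<Rightarrow> 'a \<Rightarrow> real" and x :: "'a \<Rightarrow> complex"
  assumes K: "finite K" and sym: "\<And>i j. i \<in> K \<Longrightarrow> j \<in> K \<Longrightarrow> A i j = A j i"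
    and x0: "i0 \<in> K" "x i0 \<noteq> 0"
    and eig: "\<And>i. i \<in> K \<Longrightarrow> (\<Sum>j\<in>K. of_real (A i j) * x j) = z * x i"
  shows "Im z = 0"
proof -
  define r where "r = (\<Sum>i\<in>K. (cmod (x i))\<^sup>2)"
  have "r > 0"
    unfolding r_def using K x0 by (intro sum_pos2[of _ i0]) auto
  define S where "S = (\<Sum>i\<in>K. cnj (x i) * (\<Sum>j\<in>K. of_real (A i j) * x j))"
  have "S = (\<Sum>i\<in>K. cnj (x i) * (z * x i))"
    unfolding S_def by (intro sum.cong refl) (simp add: eig)
  also have "\<dots> = z * of_real r"
    unfolding r_def of_real_sum by (simp add: sum_distrib_left complex_norm_square mult_ac del: of_real_power)
  finally have "S = z * of_real r" .
  \<comment> \<open>\<open>x\<^sup>* A x\<close> is real because \<open>A\<close> is symmetric\<close>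
  moreover have "cnj S = S"
  proof -
    have "cnj S = (\<Sum>i\<in>K. \<Sum>j\<in>K. of_real (A i j) * x i * cnj (x j))"
      unfolding S_def by (simp add: sum_distrib_left mult_ac)
    also have "\<dots> = (\<Sum>j\<in>K. \<Sum>i\<in>K. of_real (A j i) * x i * cnj (x j))"
      by (subst sum.swap) (simp add: sym cong: sum.cong)
    also have "\<dots> = S"
      unfolding S_def by (simp add: sum_distrib_left mult_ac)
    finally show ?thesis .
  qed
  ultimately have "cnj z * of_real r = z * of_real r"
    by simp
  then have "cnj z = z"
    using \<open>r > 0\<close> by simp
  then show ?thesis
    by (metis Reals_cnj_iff complex_is_Real_iff)
qed

lemma symmetric_matrix_has_eigenvector:
  fixes A :: "'a \<Rightarrow> 'a \<Rightarrow> real"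
  assumes K: "finite K" "K \<noteq> {}" and sym: "\<And>i j. i \<in> K \<Longrightarrow> j \<in> K \<Longrightarrow> A i j = A j i"
  obtains l u i0 where "i0 \<in> K" "u i0 \<noteq> 0" "\<And>i. i \<in> K \<Longrightarrow> (\<Sum>j\<in>K. A i j * u j) = l * u i"
proof -
  obtain z and x :: "'a \<Rightarrow> complex" where x0: "\<exists>i\<in>K. x i \<noteq> 0"
    and eig: "\<forall>i\<in>K. (\<Sum>j\<in>K. of_real (A i j) * x j) = z * x i"
    using complex_matrix_has_eigenvector_on[OF K, of "\<lambda>i j. of_real (A i j)"] by blast
  then obtain i0 where i0: "i0 \<in> K" "x i0 \<noteq> 0"
    by blast
  have "Im z = 0"
    using symmetric_matrix_eigenvalue_real[of K A i0 x z] K(1) sym i0 eig by blast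
  then have re: "(\<Sum>j\<in>K. A i j * Re (x j)) = Re z * Re (x i)"
    and im: "(\<Sum>j\<in>K. A i j * Im (x j)) = Re z * Im (x i)" if "i \<in> K" for i
    using arg_cong[OF eig[rule_format, OF that], of Re] arg_cong[OF eig[rule_format, OF that], of Im]
    by (simp_all add: Re_sum Im_sum)
  consider "Re (x i0) \<noteq> 0" | "Im (x i0) \<noteq> 0"
    using i0(2) complex_eqI[of "x i0" 0] by auto
  then show ?thesis
  proof cases
    case 1
    show ?thesis
      by (rule that[of i0 "\<lambda>j. Re (x j)" "Re z"]) (use i0(1) 1 re in auto)
  next
    case 2
    show ?thesis
      by (rule that[of i0 "\<lambda>j. Im (x j)" "Re z"]) (use i0(1) 2 im in auto)
  qed
qed

lemma symmetric_matrix_has_unit_eigenvector: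
  fixes A :: "'a \<Rightarrow> 'a \<Rightarrow> real"
  assumes K: "finite K" "K \<noteq> {}" and sym: "\<And>i j. i \<in> K \<Longrightarrow> j \<in> K \<Longrightarrow> A i j = A j i"
  obtains l v where "(\<Sum>i\<in>K. v i * v i) = 1" "\<And>i. i \<in> K \<Longrightarrow> (\<Sum>j\<in>K. A i j * v j) = l * v i"
proof -
  obtain l u i0 where i0: "i0 \<in> K" "u i0 \<noteq> 0"
    and u: "\<And>i. i \<in> K \<Longrightarrow> (\<Sum>j\<in>K. A i j * u j) = l * u i"
    using symmetric_matrix_has_eigenvector[of K A, OF K sym] by blast
  define s where "s = (\<Sum>i\<in>K. u i * u i)"
  have "s > 0"
    unfolding s_def using K(1) i0 by (intro sum_pos2[of K i0]) (auto simp: zero_less_mult_iff linorder_neq_iff)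
  define v where "v i = u i / sqrt s" for i
  have "(\<Sum>i\<in>K. v i * v i) = (\<Sum>i\<in>K. u i * u i) / s"
    unfolding v_def using \<open>s > 0\<close> by (simp add: sum_divide_distrib)
  also have "\<dots> = 1"
    using \<open>s > 0\<close> unfolding s_def by simp
  finally have "(\<Sum>i\<in>K. v i * v i) = 1" .
  moreover have "(\<Sum>j\<in>K. A i j * v j) = l * v i" if "i \<in> K" for i
    using u that unfolding v_def by (simp add: sum_divide_distrib[symmetric])
  ultimately show ?thesis
    by (rule that)
qed

lemma orthogonal_matrix_on_symmetric_involution:
  assumes sym: "\<And>i j. i \<in> K \<Longrightarrow> j \<in> K \<Longrightarrow> H i j = H j i"
    and inv: "\<And>i j. i \<in> K \<Longrightarrow> j \<in> K \<Longrightarrow> (\<Sum>k\<in>K. H i k * H k j) = of_bool (i = j)"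
  shows "orthogonal_matrix_on K H"
proof -
  have "(\<Sum>m\<in>K. H m i * H m j) = (\<Sum>m\<in>K. H i m * H m j)"
    and "(\<Sum>m\<in>K. H i m * H j m) = (\<Sum>m\<in>K. H i m * H m j)" if "i \<in> K" "j \<in> K" for i j
    using sym that by (auto intro!: sum.cong)
  then show ?thesis
    unfolding orthogonal_matrix_on_def using inv by simp
qed

lemma reflection_involution:
  fixes w :: "'a \<Rightarrow> real"
  assumes K: "finite K" and t: "t * (\<Sum>k\<in>K. w k * w k) = 2" and ij: "i \<in> K" "j \<in> K"
  shows "(\<Sum>k\<in>K. (of_bool (i = k) - t * (w i * w k)) * (of_bool (k = j) - t * (w k * w j))) = of_bool (i = j)"
proof -
  have "(of_bool (i = k) - t * (w i * w k)) * (of_bool (k = j) - t * (w k * w j))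
      = of_bool (i = k) * of_bool (k = j) - (t * w j) * (of_bool (i = k) * w k)
        - (t * w i) * (w k * of_bool (k = j)) + (t * t * w i * w j) * (w k * w k)" for k
    by (simp add: algebra_simps)
  then have "(\<Sum>k\<in>K. (of_bool (i = k) - t * (w i * w k)) * (of_bool (k = j) - t * (w k * w j)))
      = of_bool (i = j) - t * w j * w i - t * w i * w j + t * t * w i * w j * (\<Sum>k\<in>K. w k * w k)"
    using K ij by (simp only: sum.distrib sum_subtractf sum_distrib_left[symmetric] sum_delta_left sum_delta_right)
  also have "\<dots> = of_bool (i = j) - 2 * t * w i * w j + t * w i * w j * (t * (\<Sum>k\<in>K. w k * w k))"
    by (simp add: algebra_simps)
  finally show ?thesis
    unfolding t by simp
qed

lemma householder_reflection:
  fixes v :: "'a \<Rightarrow> real"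
  assumes K: "finite K" and a: "a \<in> K" and v: "(\<Sum>i\<in>K. v i * v i) = 1"
  obtains H where "orthogonal_matrix_on K H" "\<And>i. i \<in> K \<Longrightarrow> H i a = v i"
proof (cases "v a = 1")
  case True
  have "(\<Sum>i\<in>K - {a}. v i * v i) = 0"
    using v True K a by (simp add: sum.remove)
  then have "v i = 0" if "i \<in> K" "i \<noteq> a" for i
    using K that by (subst (asm) sum_nonneg_eq_0_iff) auto
  then have "v i = of_bool (i = a)" if "i \<in> K" for i
    using True that by auto
  moreover have "orthogonal_matrix_on K (\<lambda>i j. of_bool (i = j))"
    using K by (intro orthogonal_matrix_on_symmetric_involution) auto
  ultimately show ?thesis
    using that by auto
next
  case False
  define w where "w i = v i - of_bool (i = a)" for i
  define t where "t = 1 / (1 - v a)"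
  have "(\<Sum>k\<in>K. w k * w k) = (\<Sum>k\<in>K. v k * v k) - 2 * (\<Sum>k\<in>K. of_bool (a = k) * v k)
      + (\<Sum>k\<in>K. of_bool (a = k) * of_bool (k = a))"
    unfolding w_def by (simp add: algebra_simps sum.distrib sum_subtractf sum_distrib_left eq_commute)
  then have "t * (\<Sum>k\<in>K. w k * w k) = 2"
    using K a v False by (simp add: t_def field_simps)
  \<comment> \<open>the reflection in the hyperplane orthogonal to \<open>v - e\<^sub>a\<close>; it swaps \<open>e\<^sub>a\<close> and \<open>v\<close>\<close>
  define H where "H i j = of_bool (i = j) - t * (w i * w j)" for i j
  have "orthogonal_matrix_on K H"
    using reflection_involution[OF K \<open>t * _ = 2\<close>] unfolding H_def
    by (intro orthogonal_matrix_on_symmetric_involution) (simp_all add: mult.commute)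
  moreover have "H i a = v i" if "i \<in> K" for i
    using False by (simp add: H_def w_def t_def field_simps)
  ultimately show ?thesis
    by (rule that)
qed

lemma symmetric_matrix_deflation:
  fixes A :: "'a \<Rightarrow> 'a \<Rightarrow> real"
  assumes K: "finite K" "a \<in> K" and sym: "\<And>i j. i \<in> K \<Longrightarrow> j \<in> K \<Longrightarrow> A i j = A j i"
    and v: "(\<Sum>i\<in>K. v i * v i) = 1" and ev: "\<And>i. i \<in> K \<Longrightarrow> (\<Sum>j\<in>K. A i j * v j) = l * v i"
  obtains H B where "orthogonal_matrix_on K H" and "\<And>k q. B k q = B q k"
    and "\<And>q. q \<in> K - {a} \<Longrightarrow> B a q = 0" and "\<And>q. q \<in> K - {a} \<Longrightarrow> B q a = 0"
    and "\<And>i j. i \<in> K \<Longrightarrow> j \<in> K \<Longrightarrow> A i j = (\<Sum>k\<in>K. \<Sum>q\<in>K. H i k * B k q * H j q)"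
proof -
  obtain H where H: "orthogonal_matrix_on K H" and Ha: "\<And>i. i \<in> K \<Longrightarrow> H i a = v i"
    using householder_reflection[OF K v] by blast
  \<comment> \<open>in the basis given by the columns of \<open>H\<close>, the eigenvector \<open>v\<close> becomes \<open>e\<^sub>a\<close>\<close>
  define B where "B k q = (\<Sum>r\<in>K. \<Sum>s\<in>K. H r k * A r s * H s q)" for k q
  have B_sym: "B k q = B q k" for k q
  proof -
    have "B q k = (\<Sum>r\<in>K. \<Sum>s\<in>K. H s q * A s r * H r k)"
      unfolding B_def by (rule sum.swap)
    also have "\<dots> = B k q"
      unfolding B_def
    proof (intro sum.cong refl)
      fix r s assume "r \<in> K" "s \<in> K"
      then have "A s r = A r s"
        using sym by blast
      then show "H s q * A s r * H r k = H r k * A r s * H s q"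
        by (simp add: ac_simps)
    qed
    finally show ?thesis ..
  qed
  have "B q a = (\<Sum>r\<in>K. H r q * (\<Sum>s\<in>K. A r s * v s))" for q
    unfolding B_def sum_distrib_left by (intro sum.cong refl) (simp add: Ha mult_ac)
  also have "\<dots> q = (\<Sum>r\<in>K. l * (H r q * H r a))" for q
    by (intro sum.cong refl) (simp add: ev Ha)
  finally have B_col: "B q a = 0" if "q \<in> K - {a}" for q
    using orthogonal_matrix_on_cols[OF H _ K(2), of q] that by (simp add: sum_distrib_left[symmetric])
  have B_row: "B a q = 0" if "q \<in> K - {a}" for q
    using B_col[OF that] B_sym[of a q] by simp
  have AB: "A i j = (\<Sum>k\<in>K. \<Sum>q\<in>K. H i k * B k q * H j q)" if "i \<in> K" "j \<in> K" for i j
    using orthogonal_matrix_on_conj_cancel[OF K(1) H that] unfolding B_def by simp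
  show ?thesis
    using H B_sym B_row B_col AB by (rule that)
qed

theorem symmetric_matrix_diagonalization:
  fixes A :: "'a \<Rightarrow> 'a \<Rightarrow> real"
  assumes "finite K" and "\<And>i j. i \<in> K \<Longrightarrow> j \<in> K \<Longrightarrow> A i j = A j i"
  shows "\<exists>U l. orthogonal_matrix_on K U \<and> (\<forall>i\<in>K. \<forall>j\<in>K. A i j = (\<Sum>m\<in>K. l m * U i m * U j m))"
  using assms
proof (induction K arbitrary: A rule: finite_induct)
  case empty
  show ?case
    by (simp add: orthogonal_matrix_on_def)
next
  case (insert a F)
  let ?K = "insert a F"
  have K: "finite ?K" "a \<in> ?K" "?K \<noteq> {}" and F: "?K - {a} = F"
    using insert.hyps by auto
  obtain l0 v where v: "(\<Sum>i\<in>?K. v i * v i) = 1" and ev: "\<And>i. i \<in> ?K \<Longrightarrow> (\<Sum>j\<in>?K. A i j * v j) = l0 * v i"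
    using symmetric_matrix_has_unit_eigenvector[of ?K A, OF K(1,3) insert.prems] by blast
  obtain H B where H: "orthogonal_matrix_on ?K H" and B_sym: "\<And>k q. B k q = B q k"
    and B_aF: "\<And>q. q \<in> F \<Longrightarrow> B a q = 0" and B_Fa: "\<And>q. q \<in> F \<Longrightarrow> B q a = 0"
    and AB: "\<And>i j. i \<in> ?K \<Longrightarrow> j \<in> ?K \<Longrightarrow> A i j = (\<Sum>k\<in>?K. \<Sum>q\<in>?K. H i k * B k q * H j q)"
    using symmetric_matrix_deflation[of ?K a A v l0, OF K(1,2) insert.prems v ev] unfolding F by blast
  obtain W l where W: "orthogonal_matrix_on F W" and BW: "\<forall>i\<in>F. \<forall>j\<in>F. B i j = (\<Sum>m\<in>F. l m * W i m * W j m)"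
    using insert.IH[of B, OF B_sym] by blast
  define l' where "l' = l(a := B a a)"
  obtain W' where W': "orthogonal_matrix_on ?K W'"
    and BW': "\<And>i j. i \<in> ?K \<Longrightarrow> j \<in> ?K \<Longrightarrow> B i j = (\<Sum>m\<in>?K. l' m * W' i m * W' j m)"
    using diagonalization_insert[where B = B and U = W and l = l, OF insert.hyps B_aF B_Fa W] BW
    unfolding l'_def by blast
  define U where "U i m = (\<Sum>k\<in>?K. H i k * W' k m)" for i m
  have "A i j = (\<Sum>m\<in>?K. l' m * U i m * U j m)" if "i \<in> ?K" "j \<in> ?K" for i j
  proof -
    have "A i j = (\<Sum>k\<in>?K. \<Sum>q\<in>?K. H i k * (\<Sum>m\<in>?K. l' m * W' k m * W' q m) * H j q)"
      unfolding AB[OF that] by (intro sum.cong refl) (simp add: BW')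
    also have "\<dots> = (\<Sum>m\<in>?K. l' m * U i m * U j m)"
      unfolding U_def by (rule sum_sum_bilinear_diagonal)
    finally show ?thesis .
  qed
  moreover have "orthogonal_matrix_on ?K U"
    unfolding U_def by (rule orthogonal_matrix_on_mult[OF K(1) H W'])
  ultimately show ?case
    by blast
qed

lemma orthogonal_matrix_on_expand:
  assumes "finite K" "orthogonal_matrix_on K U" "i \<in> K"
  shows "v i = (\<Sum>m\<in>K. (\<Sum>j\<in>K. U j m * v j) * U i m)"
proof -
  have "(\<Sum>m\<in>K. (\<Sum>j\<in>K. U j m * v j) * U i m) = (\<Sum>j\<in>K. v j * (\<Sum>m\<in>K. U j m * U i m))"
    unfolding sum_distrib_left sum_distrib_right by (subst sum.swap) (simp add: mult_ac)
  also have "\<dots> = v i"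
    using assms by (simp add: orthogonal_matrix_on_rows)
  finally show ?thesis ..
qed

lemma orthogonal_matrix_on_coord:
  assumes "finite K" "orthogonal_matrix_on K U" "m \<in> K"
  shows "(\<Sum>i\<in>K. U i m * (\<Sum>m'\<in>K. a m' * U i m')) = a m"
proof -
  have "(\<Sum>i\<in>K. U i m * (\<Sum>m'\<in>K. a m' * U i m')) = (\<Sum>m'\<in>K. a m' * (\<Sum>i\<in>K. U i m' * U i m))"
    unfolding sum_distrib_left by (subst sum.swap) (simp add: mult_ac)
  also have "\<dots> = a m"
    using assms by (simp add: orthogonal_matrix_on_cols)
  finally show ?thesis .
qed

lemma diagonalized_apply:
  fixes M U :: "'a \<Rightarrow> 'a \<Rightarrow> real"
  assumes "\<forall>i\<in>K. \<forall>j\<in>K. M i j = (\<Sum>m\<in>K. \<mu> m * U i m * U j m)" "i \<in> K"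
  shows "(\<Sum>j\<in>K. M i j * v j) = (\<Sum>m\<in>K. \<mu> m * (\<Sum>j\<in>K. U j m * v j) * U i m)"
proof -
  have "(\<Sum>j\<in>K. M i j * v j) = (\<Sum>j\<in>K. \<Sum>m\<in>K. \<mu> m * U i m * U j m * v j)"
    using assms by (simp add: sum_distrib_right)
  also have "\<dots> = (\<Sum>m\<in>K. \<mu> m * (\<Sum>j\<in>K. U j m * v j) * U i m)"
    by (subst sum.swap) (simp add: sum_distrib_left sum_distrib_right mult_ac)
  finally show ?thesis .
qed

lemma diagonalized_coord_apply:
  fixes M U :: "'a \<Rightarrow> 'a \<Rightarrow> real"
  assumes K: "finite K" and U: "orthogonal_matrix_on K U"
    and M: "\<forall>i\<in>K. \<forall>j\<in>K. M i j = (\<Sum>m\<in>K. \<mu> m * U i m * U j m)" and m: "m \<in> K"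
  shows "(\<Sum>i\<in>K. U i m * (\<Sum>j\<in>K. M i j * v j)) = \<mu> m * (\<Sum>j\<in>K. U j m * v j)"
proof -
  have "(\<Sum>i\<in>K. U i m * (\<Sum>j\<in>K. M i j * v j))
      = (\<Sum>i\<in>K. U i m * (\<Sum>m'\<in>K. (\<mu> m' * (\<Sum>j\<in>K. U j m' * v j)) * U i m'))"
    using diagonalized_apply[OF M] by (intro sum.cong refl) simp
  also have "\<dots> = \<mu> m * (\<Sum>j\<in>K. U j m * v j)"
    by (rule orthogonal_matrix_on_coord[OF K U m])
  finally show ?thesis .
qed

lemma diagonalized_eigenvector:
  fixes M U :: "'a \<Rightarrow> 'a \<Rightarrow> real"
  assumes K: "finite K" and U: "orthogonal_matrix_on K U"
    and M: "\<forall>i\<in>K. \<forall>j\<in>K. M i j = (\<Sum>m\<in>K. \<mu> m * U i m * U j m)" and i: "i \<in> K" and m: "m \<in> K"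
  shows "(\<Sum>j\<in>K. M i j * U j m) = \<mu> m * U i m"
proof -
  have "(\<Sum>j\<in>K. M i j * U j m) = (\<Sum>m'\<in>K. \<mu> m' * (\<Sum>j\<in>K. U j m' * U j m) * U i m')"
    by (rule diagonalized_apply[OF M i])
  also have "\<dots> = (\<Sum>m'\<in>K. if m' = m then \<mu> m' * U i m' else 0)"
    using orthogonal_matrix_on_cols[OF U _ m] by (intro sum.cong refl) simp
  finally show ?thesis
    using K m by simp
qed

lemma symmetric_matrix_solvable:
  fixes M :: "'a \<Rightarrow> 'a \<Rightarrow> real" and f :: "'a \<Rightarrow> real"
  assumes K: "finite K" and sym: "\<And>i j. i \<in> K \<Longrightarrow> j \<in> K \<Longrightarrow> M i j = M j i"
    and f_perp: "\<And>h. (\<And>i. i \<in> K \<Longrightarrow> (\<Sum>j\<in>K. M i j * h j) = 0) \<Longrightarrow> (\<Sum>i\<in>K. f i * h i) = 0"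
  obtains g where "\<And>i. i \<in> K \<Longrightarrow> (\<Sum>j\<in>K. M i j * g j) = f i"
    and "\<And>h. (\<And>i. i \<in> K \<Longrightarrow> (\<Sum>j\<in>K. M i j * h j) = 0) \<Longrightarrow> (\<Sum>i\<in>K. g i * h i) = 0"
proof -
  obtain U \<mu> where U: "orthogonal_matrix_on K U"
    and M: "\<forall>i\<in>K. \<forall>j\<in>K. M i j = (\<Sum>m\<in>K. \<mu> m * U i m * U j m)"
    using symmetric_matrix_diagonalization[of K M] K sym by auto
  define coord where "coord v m = (\<Sum>j\<in>K. U j m * v j)" for v m
  have f_coord: "coord f m = 0" if m: "m \<in> K" "\<mu> m = 0" for m
  proof -
    have "(\<Sum>i\<in>K. f i * U i m) = 0"
      using diagonalized_eigenvector[OF K U M _ m(1)] m(2) by (intro f_perp) simp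
    then show ?thesis
      unfolding coord_def by (simp add: mult.commute)
  qed
  \<comment> \<open>invert \<open>M\<close> on the eigenvectors with nonzero eigenvalue\<close>
  define a where "a m = (if \<mu> m = 0 then 0 else coord f m / \<mu> m)" for m
  define g where "g i = (\<Sum>m\<in>K. a m * U i m)" for i
  show ?thesis
  proof (rule that)
    fix i assume i: "i \<in> K"
    have "(\<Sum>j\<in>K. M i j * g j) = (\<Sum>m\<in>K. \<mu> m * a m * U i m)"
      using diagonalized_apply[OF M i] orthogonal_matrix_on_coord[OF K U] unfolding g_def
      by (simp cong: sum.cong)
    also have "\<dots> = (\<Sum>m\<in>K. coord f m * U i m)"
      by (intro sum.cong refl) (simp add: a_def f_coord)
    also have "\<dots> = f i"
      unfolding coord_def using orthogonal_matrix_on_expand[OF K U i] ..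
    finally show "(\<Sum>j\<in>K. M i j * g j) = f i" .
  next
    fix h assume h: "\<And>i. i \<in> K \<Longrightarrow> (\<Sum>j\<in>K. M i j * h j) = 0"
    have h_coord: "\<mu> m * coord h m = 0" if "m \<in> K" for m
      using diagonalized_coord_apply[OF K U M that, of h] h unfolding coord_def by simp
    have "(\<Sum>i\<in>K. g i * h i) = (\<Sum>m\<in>K. a m * coord h m)"
      unfolding g_def coord_def sum_distrib_left sum_distrib_right by (subst sum.swap) (simp add: mult_ac)
    also have "\<dots> = 0"
      using h_coord by (intro sum.neutral) (auto simp: a_def)
    finally show "(\<Sum>i\<in>K. g i * h i) = 0" .
  qed
qed

section \<open>Sums of eigenvalues\<close>

lemma ex_subset_of_smallest:
  fixes lam :: "'a \<Rightarrow> real"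
  assumes K: "finite K" and p: "p \<le> card K"
  shows "\<exists>S\<subseteq>K. card S = p \<and> (\<forall>i\<in>S. \<forall>j\<in>K - S. lam i \<le> lam j)"
  using p
proof (induction p)
  case 0
  show ?case
    by (intro exI[of _ "{}"]) simp
next
  case (Suc p)
  then obtain S where S: "S \<subseteq> K" "card S = p" "\<forall>i\<in>S. \<forall>j\<in>K - S. lam i \<le> lam j"
    by auto
  have "finite S"
    using K S(1) by (rule finite_subset[rotated])
  have "K - S \<noteq> {}"
    using Suc.prems S card_mono[OF K, of S] by auto
  then have "Min (lam ` (K - S)) \<in> lam ` (K - S)"
    using K by (intro Min_in) auto
  then obtain j where j: "j \<in> K - S" "lam j = Min (lam ` (K - S))"
    by auto
  then have j_min: "lam j \<le> lam j'" if "j' \<in> K - S" for j'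
    using K that by simp
  show ?case
  proof (intro exI[of _ "insert j S"] conjI)
    show "insert j S \<subseteq> K" "card (insert j S) = Suc p"
      using S j \<open>finite S\<close> by auto
    show "\<forall>i\<in>insert j S. \<forall>k\<in>K - insert j S. lam i \<le> lam k"
      using S j_min by auto
  qed
qed

lemma ex_threshold:
  fixes lam :: "'a \<Rightarrow> real"
  assumes "finite S" "finite T" and le: "\<forall>i\<in>S. \<forall>j\<in>T. lam i \<le> lam j"
  obtains m where "\<forall>i\<in>S. lam i \<le> m" and "\<forall>j\<in>T. m \<le> lam j"
proof (cases "S = {}")
  case True
  show ?thesis
    by (rule that[of "if T = {} then 0 else Min (lam ` T)"]) (use assms True in auto)
next
  case False
  show ?thesis
    by (rule that[of "Max (lam ` S)"]) (use assms False in \<open>auto simp: Max_le_iff\<close>)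
qed

lemma sum_mult_nonneg_of_p_sums_nonneg:
  fixes lam w :: "'a \<Rightarrow> real"
  assumes K: "finite K" and p: "p \<le> card K"
    and p_sums: "\<And>S. S \<subseteq> K \<Longrightarrow> card S = p \<Longrightarrow> 0 \<le> (\<Sum>i\<in>S. lam i)"
    and w: "\<And>i. i \<in> K \<Longrightarrow> 0 \<le> w i \<and> w i \<le> c" and c: "0 \<le> c"
    and sum_w: "(\<Sum>i\<in>K. w i) = real p * c"
  shows "0 \<le> (\<Sum>i\<in>K. lam i * w i)"
proof -
  obtain S where S: "S \<subseteq> K" "card S = p" and S_low: "\<forall>i\<in>S. \<forall>j\<in>K - S. lam i \<le> lam j"
    using ex_subset_of_smallest[OF K p] by blast
  have "finite S"
    using K S(1) by (rule finite_subset[rotated])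
  obtain m where m_ge: "\<forall>i\<in>S. lam i \<le> m" and m_le: "\<forall>j\<in>K - S. m \<le> lam j"
    using ex_threshold[OF \<open>finite S\<close> _ S_low] K by blast
  have split: "(\<Sum>i\<in>K. f i) = (\<Sum>i\<in>S. f i) + (\<Sum>i\<in>K - S. f i)" for f :: "'a \<Rightarrow> real"
    using sum.subset_diff[OF S(1) K] by (simp add: add.commute)
  \<comment> \<open>moving weight from the \<open>p\<close> smallest values to the others only increases the sum\<close>
  have "(\<Sum>i\<in>K. lam i * w i) - c * (\<Sum>i\<in>S. lam i)
        = (\<Sum>i\<in>S. lam i * (w i - c)) + (\<Sum>i\<in>K - S. lam i * w i)"
    unfolding split by (simp add: sum_distrib_left algebra_simps sum_subtractf)
  also have "\<dots> \<ge> (\<Sum>i\<in>S. m * (w i - c)) + (\<Sum>i\<in>K - S. m * w i)"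
  proof (intro add_mono sum_mono)
    fix i assume "i \<in> S"
    then show "m * (w i - c) \<le> lam i * (w i - c)"
      using m_ge w S(1) by (intro mult_right_mono_neg) auto
  next
    fix i assume "i \<in> K - S"
    then show "m * w i \<le> lam i * w i"
      using m_le w by (intro mult_right_mono) auto
  qed
  also have "(\<Sum>i\<in>S. m * (w i - c)) + (\<Sum>i\<in>K - S. m * w i) = m * ((\<Sum>i\<in>K. w i) - real p * c)"
    unfolding split using S(2) by (simp add: sum_distrib_left[symmetric] sum_subtractf algebra_simps)
  finally have "c * (\<Sum>i\<in>S. lam i) \<le> (\<Sum>i\<in>K. lam i * w i)"
    using sum_w by simp
  moreover have "0 \<le> c * (\<Sum>i\<in>S. lam i)"
    using c p_sums[OF S] by simp
  ultimately show ?thesis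
    by linarith
qed

lemma proots_prod_list_linear: "proots (\<Prod>a\<leftarrow>xs. [:- a, 1:]) = mset (xs :: 'a :: idom list)"
proof (induction xs)
  case (Cons x xs)
  have "(\<Prod>a\<leftarrow>xs. [:- a, 1:]) \<noteq> 0"
    by (auto simp: prod_list_zero_iff)
  then have "proots (\<Prod>a\<leftarrow>x # xs. [:- a, 1:]) = proots [:- x, 1:] + proots (\<Prod>a\<leftarrow>xs. [:- a, 1:])"
    by (simp only: prod_list.Cons list.map, intro proots_mult) auto
  then show ?case
    using Cons.IH by simp
qed simp

lemma eigvals_eq_diagonal:
  fixes A U :: "nat \<Rightarrow> nat \<Rightarrow> real"
  assumes U: "orthogonal_matrix_on {..<n} U"
    and A: "\<And>i j. i < n \<Longrightarrow> j < n \<Longrightarrow> A i j = (\<Sum>m<n. l m * U i m * U j m)"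
  shows "eigvals n A = image_mset l (mset_set {..<n})"
proof -
  define P where "P = mat n n (\<lambda>(i, j). U i j)"
  define P' where "P' = mat n n (\<lambda>(i, j). U j i)"
  define D where "D = mat n n (\<lambda>(i, j). if i = j then l i else 0)"
  have carrier: "P \<in> carrier_mat n n" "P' \<in> carrier_mat n n" "D \<in> carrier_mat n n"
    unfolding P_def P'_def D_def by auto
  have "P * P' = 1\<^sub>m n"
    using orthogonal_matrix_on_rows[OF U]
    by (intro eq_matI) (auto simp: P_def P'_def scalar_prod_def lessThan_atLeast0)
  moreover have "P' * P = 1\<^sub>m n"
    using orthogonal_matrix_on_cols[OF U]
    by (intro eq_matI) (auto simp: P_def P'_def scalar_prod_def lessThan_atLeast0)
  moreover have "qf_mat n A = P * D * P'"
  proof (rule eq_matI)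
    fix i j assume ij: "i < dim_row (P * D * P')" "j < dim_col (P * D * P')"
    have "(P * D) $$ (i, k) = U i k * l k" if "k < n" for k
      using ij that by (simp add: P_def D_def scalar_prod_def if_distrib[where f="\<lambda>x. _ * x"] cong: if_cong)
    then show "qf_mat n A $$ (i, j) = (P * D * P') $$ (i, j)"
      using ij carrier by (simp add: qf_mat_def A P'_def scalar_prod_def lessThan_atLeast0 mult_ac)
  qed (simp_all add: qf_mat_def P_def P'_def)
  ultimately have "similar_mat (qf_mat n A) D"
    unfolding similar_mat_def similar_mat_wit_def using carrier
    by (intro exI[of _ P] exI[of _ P']) (auto simp: qf_mat_def)
  then have "char_poly (qf_mat n A) = char_poly D"
    by (rule char_poly_similar)
  also have "\<dots> = (\<Prod>a\<leftarrow>diag_mat D. [:- a, 1:])"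
    by (rule char_poly_upper_triangular[OF carrier(3)]) (auto simp: upper_triangular_def D_def)
  also have "diag_mat D = map l [0..<n]"
    by (simp add: diag_mat_def D_def)
  finally have "char_poly (qf_mat n A) = (\<Prod>a\<leftarrow>map l [0..<n]. [:- a, 1:])" .
  then show ?thesis
    unfolding eigvals_def by (simp only: proots_prod_list_linear) (simp add: mset_map mset_upt lessThan_atLeast0)
qed

lemma p_pos_semidef_diagonal:
  fixes A U :: "nat \<Rightarrow> nat \<Rightarrow> real"
  assumes psd: "p_pos_semidef n p A" and U: "orthogonal_matrix_on {..<n} U"
    and A: "\<forall>i\<in>{..<n}. \<forall>j\<in>{..<n}. A i j = (\<Sum>m<n. l m * U i m * U j m)"
    and S: "S \<subseteq> {..<n}" "card S = p"
  shows "0 \<le> (\<Sum>i\<in>S. l i)"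
proof -
  have "eigvals n A = image_mset l (mset_set {..<n})"
    using A by (intro eigvals_eq_diagonal[OF U]) auto
  then have "image_mset l (mset_set S) \<subseteq># eigvals n A"
    using S by (auto intro: image_mset_subseteq_mono subset_imp_msubset_mset_set)
  then show ?thesis
    using psd S unfolding p_pos_semidef_def by (auto simp: sum_unfold_sum_mset)
qed

lemma p_pos_semidef_trace_nonneg:
  fixes A G :: "nat \<Rightarrow> nat \<Rightarrow> real"
  assumes p: "p \<le> n" and sym: "\<And>i j. i < n \<Longrightarrow> j < n \<Longrightarrow> A i j = A j i"
    and psd: "p_pos_semidef n p A"
    and G_nonneg: "\<And>x. 0 \<le> (\<Sum>j<n. \<Sum>k<n. x j * x k * G j k)"
    and G_le: "\<And>x. (\<Sum>j<n. \<Sum>k<n. x j * x k * G j k) \<le> c * (\<Sum>j<n. x j * x j)"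
    and G_trace: "(\<Sum>j<n. G j j) = real p * c" and c: "0 \<le> c"
  shows "0 \<le> (\<Sum>j<n. \<Sum>k<n. A j k * G j k)"
proof -
  obtain U l where U: "orthogonal_matrix_on {..<n} U"
    and A: "\<forall>i\<in>{..<n}. \<forall>j\<in>{..<n}. A i j = (\<Sum>m<n. l m * U i m * U j m)"
    using symmetric_matrix_diagonalization[of "{..<n}" A] sym by auto
  have l_sums: "0 \<le> (\<Sum>i\<in>S. l i)" if "S \<subseteq> {..<n}" "card S = p" for S
    using p_pos_semidef_diagonal[OF psd U A that] .
  \<comment> \<open>\<open>tr (A G) = \<Sum>\<^sub>m l\<^sub>m w\<^sub>m\<close> with weights \<open>w\<^sub>m = u\<^sub>m\<^sup>T G u\<^sub>m \<in> [0, c]\<close> summing to \<open>p c\<close>\<close>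
  define w where "w m = (\<Sum>j<n. \<Sum>k<n. U j m * U k m * G j k)" for m
  have w: "0 \<le> w m \<and> w m \<le> c" if "m < n" for m
    using G_nonneg[of "\<lambda>j. U j m"] G_le[of "\<lambda>j. U j m"] orthogonal_matrix_on_cols[OF U, of m m] that
    unfolding w_def by simp
  have "(\<Sum>m<n. w m) = (\<Sum>j<n. \<Sum>k<n. (\<Sum>m<n. U j m * U k m) * G j k)"
    unfolding w_def sum_distrib_right
    by (subst sum.swap, rule sum.cong[OF refl], subst sum.swap, simp)
  also have "\<dots> = (\<Sum>j<n. \<Sum>k<n. of_bool (j = k) * G j k)"
    by (intro sum.cong refl) (simp add: orthogonal_matrix_on_rows[OF U])
  also have "\<dots> = (\<Sum>j<n. G j j)"
    by simp
  finally have sum_w: "(\<Sum>m<n. w m) = real p * c"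
    using G_trace by simp
  have "0 \<le> (\<Sum>m<n. l m * w m)"
    using p l_sums w c sum_w by (intro sum_mult_nonneg_of_p_sums_nonneg[where c = c]) auto
  also have "(\<Sum>m<n. l m * w m) = (\<Sum>j<n. \<Sum>k<n. (\<Sum>m<n. l m * U j m * U k m) * G j k)"
    unfolding w_def sum_distrib_left sum_distrib_right
    by (subst sum.swap, rule sum.cong[OF refl], subst sum.swap, simp add: mult_ac)
  also have "\<dots> = (\<Sum>j<n. \<Sum>k<n. A j k * G j k)"
    using A by simp
  finally show ?thesis .
qed

section \<open>Interior and exterior products of forms\<close>

lemma finite_idx [simp]: "finite (idx n p)"
  unfolding idx_def by (rule finite_subset[of _ "Pow {..<n}"]) auto

lemma forms_zero_outside: "f \<in> forms n p \<Longrightarrow> I \<notin> idx n p \<Longrightarrow> f I = 0"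
  unfolding forms_def idx_def by auto

lemma sgn_pos_mult_self [simp]: "sgn_pos k B * sgn_pos k B = 1"
  unfolding sgn_pos_def by (simp add: power_mult_distrib[symmetric])

lemma sgn_pos_cancel: "sgn_pos k B * a * (sgn_pos k B * b) = (a * b :: real)"
proof -
  have "sgn_pos k B * a * (sgn_pos k B * b) = (sgn_pos k B * sgn_pos k B) * (a * b)"
    by (simp only: mult_ac)
  then show ?thesis
    by simp
qed

lemma sgn_pos_insert:
  assumes "a \<notin> B"
  shows "sgn_pos k (insert a B) = (if a < k then - sgn_pos k B else sgn_pos k B)"
proof -
  have fin: "finite {i \<in> B. i < k}"
    by (rule finite_subset[of _ "{..<k}"]) auto
  show ?thesis
  proof (cases "a < k")
    case True
    then have "{i \<in> insert a B. i < k} = insert a {i \<in> B. i < k}"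
      by auto
    then have "card {i \<in> insert a B. i < k} = Suc (card {i \<in> B. i < k})"
      using fin assms by simp
    then show ?thesis
      using True unfolding sgn_pos_def by simp
  next
    case False
    then have "{i \<in> insert a B. i < k} = {i \<in> B. i < k}"
      by auto
    then show ?thesis
      using False unfolding sgn_pos_def by simp
  qed
qed

lemma sum_idx_remove_insert:
  fixes h :: "nat set \<Rightarrow> nat \<Rightarrow> real"
  assumes p: "1 \<le> p"
  shows "(\<Sum>J\<in>idx n p. \<Sum>k\<in>J. h (J - {k}) k) = (\<Sum>I\<in>idx n (p - 1). \<Sum>j\<in>{..<n} - I. h I j)"
proof -
  define L where "L = Sigma (idx n p) (\<lambda>J. J)"
  define R where "R = Sigma (idx n (p - 1)) (\<lambda>I. {..<n} - I)"
  have fin: "finite J" if "J \<in> idx n q" for J q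
    using that unfolding idx_def by (auto intro: finite_subset)
  have bij: "bij_betw (\<lambda>(I, j). (insert j I, j)) R L"
  proof (rule bij_betw_byWitness[where f' = "\<lambda>(J, k). (J - {k}, k)"])
    show "\<forall>x\<in>R. (\<lambda>(J, k). (J - {k}, k)) ((\<lambda>(I, j). (insert j I, j)) x) = x"
      unfolding R_def by auto
    show "\<forall>x\<in>L. (\<lambda>(I, j). (insert j I, j)) ((\<lambda>(J, k). (J - {k}, k)) x) = x"
      unfolding L_def by (auto simp: insert_absorb)
    show "(\<lambda>(I, j). (insert j I, j)) ` R \<subseteq> L"
      using p fin unfolding R_def L_def idx_def by auto
    show "(\<lambda>(J, k). (J - {k}, k)) ` L \<subseteq> R"
      using fin unfolding R_def L_def idx_def by auto
  qed
  have "(\<Sum>J\<in>idx n p. \<Sum>k\<in>J. h (J - {k}) k) = (\<Sum>(J, k)\<in>L. h (J - {k}) k)"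
    unfolding L_def by (rule sum.Sigma) (auto intro: fin)
  also have "\<dots> = (\<Sum>(I, j)\<in>R. h I j)"
    by (subst sum.reindex_bij_betw[OF bij, symmetric]) (auto simp: R_def intro!: sum.cong)
  also have "\<dots> = (\<Sum>I\<in>idx n (p - 1). \<Sum>j\<in>{..<n} - I. h I j)"
    unfolding R_def by (rule sum.Sigma[symmetric]) auto
  finally show ?thesis .
qed

text \<open>\<open>contract n x g\<close> is \<open>x \<lrcorner> g\<close> for the vector \<open>x = x\<^sub>j e\<^sub>j\<close>, and \<open>wedge_basis k g\<close> below is \<open>\<omega>\<^sup>k \<and> g\<close>.\<close>

definition contract :: "nat \<Rightarrow> (nat \<Rightarrow> real) \<Rightarrow> form \<Rightarrow> form" where
  "contract n x g = (\<lambda>I. \<Sum>j<n. x j * interior j g I)"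

lemma sum_lessThan_Diff: "(\<Sum>j\<in>{..<n::nat} - I. f j) = (\<Sum>j<n. if j \<in> I then 0 else (f j :: real))"
proof -
  have "{..<n} - I = {j \<in> {..<n}. j \<notin> I}"
    by auto
  then have "(\<Sum>j\<in>{..<n} - I. f j) = (\<Sum>j<n. if j \<notin> I then f j else 0)"
    using sum.inter_filter[of "{..<n}" f "\<lambda>j. j \<notin> I"] by simp
  also have "\<dots> = (\<Sum>j<n. if j \<in> I then 0 else f j)"
    by (rule sum.cong) auto
  finally show ?thesis .
qed

lemma wedge1_contract_adjoint:
  assumes p: "1 \<le> p"
  shows "form_inner n p (wedge1 n x \<xi>) g = form_inner n (p - 1) \<xi> (contract n x g)"
proof -
  define h where "h I k = x k * sgn_pos k I * \<xi> I * g (insert k I)" for I k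
  have "form_inner n p (wedge1 n x \<xi>) g = (\<Sum>J\<in>idx n p. \<Sum>k\<in>J. h (J - {k}) k)"
    unfolding form_inner_def wedge1_def
  proof (rule sum.cong[OF refl])
    fix J assume "J \<in> idx n p"
    then have "J \<inter> {..<n} = J"
      unfolding idx_def by auto
    then show "(\<Sum>k\<in>J \<inter> {..<n}. x k * sgn_pos k (J - {k}) * \<xi> (J - {k})) * g J
        = (\<Sum>k\<in>J. h (J - {k}) k)"
      unfolding sum_distrib_right h_def by (auto simp: insert_absorb intro!: sum.cong)
  qed
  also have "\<dots> = (\<Sum>I\<in>idx n (p - 1). \<Sum>j\<in>{..<n} - I. h I j)"
    by (rule sum_idx_remove_insert[OF p])
  also have "\<dots> = form_inner n (p - 1) \<xi> (contract n x g)"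
    unfolding form_inner_def contract_def
    by (intro sum.cong refl) (auto simp: sum_lessThan_Diff sum_distrib_left interior_def h_def intro!: sum.cong)
  finally show ?thesis .
qed

lemma interior_in_forms:
  assumes g: "g \<in> forms n p"
  shows "interior j g \<in> forms n (p - 1)"
  unfolding forms_def
proof (intro CollectI allI impI)
  fix I assume "interior j g I \<noteq> 0"
  then have "j \<notin> I" and "g (insert j I) \<noteq> 0"
    unfolding interior_def by (auto split: if_splits)
  moreover from this have "insert j I \<subseteq> {..<n}" "card (insert j I) = p"
    using g unfolding forms_def by auto
  moreover from this have "finite I"
    by (auto intro: finite_subset)
  ultimately show "I \<subseteq> {..<n} \<and> card I = p - 1"
    by auto
qed

lemma wedge1_in_forms:
  assumes \<xi>: "\<xi> \<in> forms n (p - 1)" and p: "1 \<le> p"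
  shows "wedge1 n x \<xi> \<in> forms n p"
  unfolding forms_def
proof (intro CollectI allI impI)
  fix J assume "wedge1 n x \<xi> J \<noteq> 0"
  then obtain k where k: "k \<in> J" "k < n" and "\<xi> (J - {k}) \<noteq> 0"
    unfolding wedge1_def by (metis (no_types, lifting) IntE lessThan_iff mult_zero_right sum.neutral)
  then have "J - {k} \<subseteq> {..<n}" "card (J - {k}) = p - 1"
    using \<xi> unfolding forms_def by auto
  moreover from this have "finite J"
    using finite_subset by fastforce
  moreover from this have "card J \<ge> 1"
    using k by (auto simp: Suc_le_eq card_gt_0_iff)
  ultimately show "J \<subseteq> {..<n} \<and> card J = p"
    using k p by auto
qed

lemma F_op_in_forms:
  assumes "g \<in> forms n p" "1 \<le> p"
  shows "F_op n \<theta> g \<in> forms n p"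
  unfolding forms_def
proof (intro CollectI allI impI)
  fix J assume "F_op n \<theta> g J \<noteq> 0"
  then obtain j where "wedge1 n (\<lambda>k. \<theta> j k) (interior j g) J \<noteq> 0"
    unfolding F_op_def using sum.not_neutral_contains_not_neutral by blast
  then show "J \<subseteq> {..<n} \<and> card J = p"
    using wedge1_in_forms[OF interior_in_forms[OF assms(1)] assms(2)] unfolding forms_def by blast
qed

lemma form_inner_nonneg: "0 \<le> form_inner n p f f"
  unfolding form_inner_def by (intro sum_nonneg) simp

lemma form_inner_commute: "form_inner n p f g = form_inner n p g f"
  unfolding form_inner_def by (simp add: mult.commute)

lemma form_inner_Cauchy_Schwarz:
  "form_inner n p f g \<le> sqrt (form_inner n p f f) * sqrt (form_inner n p g g)"
proof -
  have "(form_inner n p f g)\<^sup>2 \<le> form_inner n p f f * form_inner n p g g"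
    unfolding form_inner_def using Cauchy_Schwarz_ineq_sum[of f g "idx n p"] by (simp add: power2_eq_square)
  then have "sqrt ((form_inner n p f g)\<^sup>2) \<le> sqrt (form_inner n p f f * form_inner n p g g)"
    by (rule real_sqrt_le_mono)
  then show ?thesis
    by (simp add: real_sqrt_mult)
qed

lemma form_inner_F_op:
  assumes p: "1 \<le> p"
  shows "form_inner n p (F_op n \<theta> g) h
       = (\<Sum>j<n. \<Sum>k<n. \<theta> j k * form_inner n (p - 1) (interior j g) (interior k h))"
proof -
  have "form_inner n p (F_op n \<theta> g) h = (\<Sum>j<n. form_inner n p (wedge1 n (\<lambda>k. \<theta> j k) (interior j g)) h)"
    unfolding form_inner_def F_op_def sum_distrib_right by (rule sum.swap)
  also have "\<dots> = (\<Sum>j<n. form_inner n (p - 1) (interior j g) (contract n (\<lambda>k. \<theta> j k) h))"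
    using wedge1_contract_adjoint[OF p] by simp
  also have "\<dots> = (\<Sum>j<n. \<Sum>k<n. \<theta> j k * form_inner n (p - 1) (interior j g) (interior k h))"
    unfolding form_inner_def contract_def sum_distrib_left
    by (rule sum.cong[OF refl], subst sum.swap) (simp add: mult_ac)
  finally show ?thesis .
qed

lemma form_inner_contract:
  "form_inner n q (contract n x g) (contract n x g)
     = (\<Sum>j<n. \<Sum>k<n. x j * x k * form_inner n q (interior j g) (interior k g))"
proof -
  have "form_inner n q (contract n x g) (contract n x g)
      = (\<Sum>I\<in>idx n q. \<Sum>j<n. \<Sum>k<n. x j * x k * (interior j g I * interior k g I))"
    unfolding form_inner_def contract_def sum_product by (simp add: mult_ac)
  also have "\<dots> = (\<Sum>j<n. \<Sum>k<n. \<Sum>I\<in>idx n q. x j * x k * (interior j g I * interior k g I))"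
    by (subst sum.swap) (rule sum.cong[OF refl], rule sum.swap)
  finally show ?thesis
    unfolding form_inner_def sum_distrib_left .
qed

lemma sum_form_inner_interior_self:
  assumes p: "1 \<le> p"
  shows "(\<Sum>j<n. form_inner n (p - 1) (interior j g) (interior j g)) = real p * form_inner n p g g"
proof -
  have "(\<Sum>j<n. form_inner n (p - 1) (interior j g) (interior j g))
      = (\<Sum>I\<in>idx n (p - 1). \<Sum>j\<in>{..<n} - I. g (insert j I) * g (insert j I))"
    unfolding form_inner_def
    by (subst sum.swap, rule sum.cong[OF refl])
      (simp add: sum_lessThan_Diff interior_def sgn_pos_cancel if_distrib[where f="\<lambda>x. x * _"] cong: if_cong)
  also have "\<dots> = (\<Sum>J\<in>idx n p. \<Sum>k\<in>J. g (insert k (J - {k})) * g (insert k (J - {k})))"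
    by (rule sum_idx_remove_insert[OF p, symmetric])
  also have "\<dots> = (\<Sum>J\<in>idx n p. real p * (g J * g J))"
  proof (rule sum.cong[OF refl])
    fix J assume J: "J \<in> idx n p"
    have "(\<Sum>k\<in>J. g (insert k (J - {k})) * g (insert k (J - {k}))) = (\<Sum>k\<in>J. g J * g J)"
      by (rule sum.cong) (auto simp: insert_absorb)
    also have "\<dots> = real p * (g J * g J)"
      using J unfolding idx_def by simp
    finally show "(\<Sum>k\<in>J. g (insert k (J - {k})) * g (insert k (J - {k}))) = real p * (g J * g J)" .
  qed
  also have "\<dots> = real p * form_inner n p g g"
    unfolding form_inner_def by (simp add: sum_distrib_left)
  finally show ?thesis .
qed

definition wedge_basis :: "nat \<Rightarrow> form \<Rightarrow> form" where
  "wedge_basis k g = (\<lambda>J. if k \<in> J then sgn_pos k (J - {k}) * g (J - {k}) else 0)"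

lemma interior_wedge_basis_anticomm:
  "interior j (wedge_basis k g) I + wedge_basis k (interior j g) I = (if j = k then g I else 0)"
proof (cases "j = k")
  case True
  then show ?thesis
    unfolding interior_def wedge_basis_def
    by (cases "j \<in> I") (simp_all add: insert_absorb mult.assoc[symmetric])
next
  case j_ne_k: False
  show ?thesis
  proof (cases "k \<in> I \<and> j \<notin> I")
    case True
    define B where "B = I - {k}"
    have I: "I = insert k B" and kB: "k \<notin> B" and jB: "j \<notin> B"
      using True unfolding B_def by auto
    have "insert j I - {k} = insert j B"
      using j_ne_k kB unfolding I by auto
    moreover have "sgn_pos j I = (if k < j then - sgn_pos j B else sgn_pos j B)"
      unfolding I by (rule sgn_pos_insert[OF kB])
    moreover have "sgn_pos k (insert j B) = (if j < k then - sgn_pos k B else sgn_pos k B)"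
      by (rule sgn_pos_insert[OF jB])
    \<comment> \<open>the two terms differ by the sign of exchanging \<open>\<omega>\<^sup>j\<close> and \<open>\<omega>\<^sup>k\<close>\<close>
    ultimately show ?thesis
      using True j_ne_k jB unfolding interior_def wedge_basis_def B_def[symmetric]
      by (cases "j < k") (auto simp: algebra_simps)
  next
    case False
    then show ?thesis
      using j_ne_k unfolding interior_def wedge_basis_def by auto
  qed
qed

lemma contract_wedge1_anticomm:
  "contract n x (wedge1 n x g) I + wedge1 n x (contract n x g) I = (\<Sum>j<n. x j * x j) * g I"
proof -
  have restrict: "(\<Sum>k\<in>A \<inter> {..<n}. f k) = (\<Sum>k<n. if k \<in> A then f k else (0::real))" for A f
    using sum.inter_restrict[of "{..<n}" f A] by (simp add: Int_commute)
  have "contract n x (wedge1 n x g) I = (\<Sum>j<n. \<Sum>k<n. x j * x k * interior j (wedge_basis k g) I)"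
    unfolding contract_def interior_def wedge1_def wedge_basis_def restrict
    by (rule sum.cong[OF refl]) (auto simp: sum_distrib_left mult_ac intro!: sum.cong)
  moreover have "wedge1 n x (contract n x g) I = (\<Sum>j<n. \<Sum>k<n. x j * x k * wedge_basis k (interior j g) I)"
    unfolding contract_def interior_def wedge1_def wedge_basis_def restrict
    by (subst sum.swap, rule sum.cong[OF refl]) (auto simp: sum_distrib_left mult_ac intro!: sum.cong)
  ultimately have "contract n x (wedge1 n x g) I + wedge1 n x (contract n x g) I
      = (\<Sum>j<n. \<Sum>k<n. x j * x k * (if j = k then g I else 0))"
    by (simp add: sum.distrib[symmetric] distrib_left[symmetric] interior_wedge_basis_anticomm)
  also have "\<dots> = (\<Sum>j<n. x j * x j) * g I"
    by (simp add: sum_distrib_right if_distrib[where f="\<lambda>y. _ * y"] cong: if_cong)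
  finally show ?thesis .
qed

lemma contract_norm_le:
  assumes p: "1 \<le> p"
  shows "form_inner n (p - 1) (contract n x g) (contract n x g) \<le> (\<Sum>j<n. x j * x j) * form_inner n p g g"
proof -
  \<comment> \<open>pair the two terms of the anticommutator with \<open>g\<close> and drop the nonnegative one\<close>
  have "form_inner n (p - 1) (contract n x g) (contract n x g) + form_inner n (Suc p) (wedge1 n x g) (wedge1 n x g)
      = form_inner n p (\<lambda>I. contract n x (wedge1 n x g) I + wedge1 n x (contract n x g) I) g"
    using wedge1_contract_adjoint[OF p, of n x "contract n x g" g]
      wedge1_contract_adjoint[of "Suc p" n x g "wedge1 n x g"]
    unfolding form_inner_def by (simp add: sum.distrib algebra_simps)
  also have "\<dots> = (\<Sum>j<n. x j * x j) * form_inner n p g g"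
    unfolding contract_wedge1_anticomm form_inner_def by (simp add: sum_distrib_left mult_ac)
  finally show ?thesis
    using form_inner_nonneg[of n "Suc p" "wedge1 n x g"] by linarith
qed

lemma contract_norm_le_F_op:
  fixes \<theta> :: "nat \<Rightarrow> nat \<Rightarrow> real" and \<tau> :: "nat \<Rightarrow> real"
  assumes p1: "1 \<le> p" and pn: "p \<le> n"
    and sym: "\<And>i j. i < n \<Longrightarrow> j < n \<Longrightarrow> \<theta> i j = \<theta> j i"
    and psd: "p_pos_semidef n p (\<lambda>i j. \<theta> i j - \<tau> i * \<tau> j)"
  shows "form_inner n (p - 1) (contract n \<tau> g) (contract n \<tau> g) \<le> form_inner n p (F_op n \<theta> g) g"
proof -
  define G where "G j k = form_inner n (p - 1) (interior j g) (interior k g)" for j k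
  \<comment> \<open>\<open>tr ((\<theta> - \<tau> \<otimes> \<tau>) G) \<ge> 0\<close>, since \<open>0 \<le> G \<le> |g|\<^sup>2\<close> and \<open>tr G = p |g|\<^sup>2\<close>\<close>
  have "0 \<le> (\<Sum>j<n. \<Sum>k<n. (\<theta> j k - \<tau> j * \<tau> k) * G j k)"
  proof (rule p_pos_semidef_trace_nonneg[OF pn _ psd, where c = "form_inner n p g g"])
    show "\<theta> i j - \<tau> i * \<tau> j = \<theta> j i - \<tau> j * \<tau> i" if "i < n" "j < n" for i j
      using sym[OF that] by simp
    show "0 \<le> (\<Sum>j<n. \<Sum>k<n. x j * x k * G j k)" for x
      unfolding G_def form_inner_contract[symmetric] by (rule form_inner_nonneg)
    show "(\<Sum>j<n. \<Sum>k<n. x j * x k * G j k) \<le> form_inner n p g g * (\<Sum>j<n. x j * x j)" for x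
      unfolding G_def form_inner_contract[symmetric] using contract_norm_le[OF p1, of n x g]
      by (simp add: mult.commute)
    show "(\<Sum>j<n. G j j) = real p * form_inner n p g g"
      unfolding G_def by (rule sum_form_inner_interior_self[OF p1])
    show "0 \<le> form_inner n p g g"
      by (rule form_inner_nonneg)
  qed
  also have "(\<Sum>j<n. \<Sum>k<n. (\<theta> j k - \<tau> j * \<tau> k) * G j k)
      = (\<Sum>j<n. \<Sum>k<n. \<theta> j k * G j k) - (\<Sum>j<n. \<Sum>k<n. \<tau> j * \<tau> k * G j k)"
    by (simp add: sum_subtractf left_diff_distrib)
  also have "\<dots> = form_inner n p (F_op n \<theta> g) g - form_inner n (p - 1) (contract n \<tau> g) (contract n \<tau> g)"
    unfolding G_def form_inner_contract form_inner_F_op[OF p1] ..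
  finally show ?thesis
    by simp
qed

section \<open>The range of \<open>F\<^sub>\<theta>\<close>\<close>

lemma interior_linear:
  "interior j (\<lambda>P. \<Sum>J\<in>S. c J * b J P) I = (\<Sum>J\<in>S. c J * interior j (b J) I)"
  unfolding interior_def by (simp add: sum_distrib_left mult_ac)

lemma wedge1_linear:
  "wedge1 n x (\<lambda>P. \<Sum>J\<in>S. c J * b J P) I = (\<Sum>J\<in>S. c J * wedge1 n x (b J) I)"
  unfolding wedge1_def sum_distrib_left by (subst sum.swap) (simp add: mult_ac)

lemma F_op_linear:
  "F_op n \<theta> (\<lambda>P. \<Sum>J\<in>S. c J * b J P) I = (\<Sum>J\<in>S. c J * F_op n \<theta> (b J) I)"
  unfolding F_op_def interior_linear wedge1_linear sum_distrib_left by (rule sum.swap)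

definition basis_form :: "nat set \<Rightarrow> form" where
  "basis_form J = (\<lambda>I. of_bool (I = J))"

lemma form_expand:
  assumes "g \<in> forms n p"
  shows "g = (\<lambda>P. \<Sum>J\<in>idx n p. g J * basis_form J P)"
proof
  fix P
  show "g P = (\<Sum>J\<in>idx n p. g J * basis_form J P)"
    using forms_zero_outside[OF assms, of P] by (cases "P \<in> idx n p") (simp_all add: basis_form_def)
qed

lemma F_op_expand:
  assumes "g \<in> forms n p"
  shows "F_op n \<theta> g I = (\<Sum>J\<in>idx n p. g J * F_op n \<theta> (basis_form J) I)"
  by (subst form_expand[OF assms]) (rule F_op_linear)

lemma form_inner_basis_form: "I \<in> idx n p \<Longrightarrow> form_inner n p f (basis_form I) = f I"
  unfolding form_inner_def basis_form_def by simp

lemma F_op_self_adjoint: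
  assumes p: "1 \<le> p" and sym: "\<And>i j. i < n \<Longrightarrow> j < n \<Longrightarrow> \<theta> i j = \<theta> j i"
  shows "form_inner n p (F_op n \<theta> g) h = form_inner n p g (F_op n \<theta> h)"
proof -
  have "form_inner n p (F_op n \<theta> g) h
      = (\<Sum>k<n. \<Sum>j<n. \<theta> j k * form_inner n (p - 1) (interior j g) (interior k h))"
    unfolding form_inner_F_op[OF p] by (rule sum.swap)
  also have "\<dots> = (\<Sum>k<n. \<Sum>j<n. \<theta> k j * form_inner n (p - 1) (interior k h) (interior j g))"
    by (intro sum.cong refl) (simp add: sym form_inner_commute)
  also have "\<dots> = form_inner n p g (F_op n \<theta> h)"
    unfolding form_inner_commute[of n p g] form_inner_F_op[OF p] ..
  finally show ?thesis .
qed

lemma F_op_basis_form_sym: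
  assumes "1 \<le> p" and "\<And>i j. i < n \<Longrightarrow> j < n \<Longrightarrow> \<theta> i j = \<theta> j i"
    and "I \<in> idx n p" and "J \<in> idx n p"
  shows "F_op n \<theta> (basis_form J) I = F_op n \<theta> (basis_form I) J"
  using F_op_self_adjoint[of p n \<theta> "basis_form J" "basis_form I"] assms
  by (simp add: form_inner_basis_form form_inner_commute[of n p "basis_form J"])

lemma zero_extension_in_forms: "(\<lambda>I. if I \<in> idx n p then v I else 0) \<in> forms n p"
  unfolding forms_def idx_def by auto

lemma forms_eqI:
  assumes "f \<in> forms n p" "g \<in> forms n p" "\<And>I. I \<in> idx n p \<Longrightarrow> f I = g I"
  shows "f = g"
  using assms forms_zero_outside by (metis ext)

lemma form_inner_self_eq_0:
  assumes "form_inner n p g g = 0" "I \<in> idx n p"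
  shows "g I = 0"
  using assms unfolding form_inner_def by (subst (asm) sum_nonneg_eq_0_iff) auto

lemma form_inner_eq_0_if_self_eq_0:
  assumes "form_inner n p g g = 0"
  shows "form_inner n p f g = 0"
  unfolding form_inner_def using form_inner_self_eq_0[OF assms] by simp

lemma form_inner_diff_left:
  "form_inner n p (\<lambda>I. f I - g I) h = form_inner n p f h - form_inner n p g h"
  unfolding form_inner_def by (simp add: left_diff_distrib sum_subtractf)

lemma forms_diff: "f \<in> forms n p \<Longrightarrow> g \<in> forms n p \<Longrightarrow> (\<lambda>I. f I - g I) \<in> forms n p"
  unfolding forms_def mem_Collect_eq by (metis diff_0_right diff_self)

lemma F_op_diff:
  assumes "g \<in> forms n p" "h \<in> forms n p"
  shows "F_op n \<theta> (\<lambda>I. g I - h I) = (\<lambda>J. F_op n \<theta> g J - F_op n \<theta> h J)"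
  using assms forms_diff[OF assms]
  by (intro ext) (simp add: F_op_expand[of _ n p] left_diff_distrib sum_subtractf)

lemma F_op_zero_extension:
  "F_op n \<theta> (\<lambda>I. if I \<in> idx n p then v I else 0) I
     = (\<Sum>J\<in>idx n p. F_op n \<theta> (basis_form J) I * v J)"
  unfolding F_op_expand[OF zero_extension_in_forms] by (simp add: mult.commute)

lemma F_op_solvable:
  assumes p: "1 \<le> p" and sym: "\<And>i j. i < n \<Longrightarrow> j < n \<Longrightarrow> \<theta> i j = \<theta> j i"
    and f: "f \<in> forms n p"
    and f_perp: "\<And>h. h \<in> forms n p \<Longrightarrow> F_op n \<theta> h = (\<lambda>_. 0) \<Longrightarrow> form_inner n p f h = 0"
  obtains g where "g \<in> forms n p" "F_op n \<theta> g = f"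
    and "\<And>h. h \<in> forms n p \<Longrightarrow> F_op n \<theta> h = (\<lambda>_. 0) \<Longrightarrow> form_inner n p g h = 0"
proof -
  define M where "M I J = F_op n \<theta> (basis_form J) I" for I J
  define ext0 where "ext0 v = (\<lambda>I. if I \<in> idx n p then v I else 0)" for v :: form
  have ext0: "ext0 v \<in> forms n p" "F_op n \<theta> (ext0 v) I = (\<Sum>J\<in>idx n p. M I J * v J)" for v I
    unfolding ext0_def M_def by (rule zero_extension_in_forms, rule F_op_zero_extension)
  have ext0_id: "ext0 h = h" if "h \<in> forms n p" for h
    using forms_zero_outside[OF that] unfolding ext0_def by auto
  have kernel: "F_op n \<theta> (ext0 h) = (\<lambda>_. 0)" if "\<And>I. I \<in> idx n p \<Longrightarrow> (\<Sum>J\<in>idx n p. M I J * h J) = 0" for h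
    using that ext0 forms_zero_outside[OF F_op_in_forms[OF ext0(1) p]] by (metis ext)
  obtain v where v_sol: "\<And>I. I \<in> idx n p \<Longrightarrow> (\<Sum>J\<in>idx n p. M I J * v J) = f I"
    and v_perp: "\<And>h. (\<And>I. I \<in> idx n p \<Longrightarrow> (\<Sum>J\<in>idx n p. M I J * h J) = 0) \<Longrightarrow> (\<Sum>I\<in>idx n p. v I * h I) = 0"
  proof (rule symmetric_matrix_solvable[of "idx n p" M f])
    show "M I J = M J I" if "I \<in> idx n p" "J \<in> idx n p" for I J
      unfolding M_def by (rule F_op_basis_form_sym[of p n \<theta> I J, OF p sym that])
    show "(\<Sum>I\<in>idx n p. f I * h I) = 0"
      if "\<And>I. I \<in> idx n p \<Longrightarrow> (\<Sum>J\<in>idx n p. M I J * h J) = 0" for h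
      using f_perp[OF ext0(1) kernel[OF that]] unfolding form_inner_def ext0_def by simp
  qed auto
  show ?thesis
  proof (rule that[of "ext0 v"])
    show "F_op n \<theta> (ext0 v) = f"
      using ext0 v_sol f F_op_in_forms[OF ext0(1) p] by (intro forms_eqI) auto
    show "form_inner n p (ext0 v) h = 0" if "h \<in> forms n p" "F_op n \<theta> h = (\<lambda>_. 0)" for h
      using v_perp[of h] ext0(2)[of h] that unfolding ext0_id[OF that(1)]
      by (simp add: form_inner_def ext0_def)
  qed (rule ext0)
qed

lemma F_img_iff:
  assumes p: "1 \<le> p" and sym: "\<And>i j. i < n \<Longrightarrow> j < n \<Longrightarrow> \<theta> i j = \<theta> j i"
  shows "f \<in> F_img n p \<theta> \<longleftrightarrow>
           f \<in> forms n p \<and> (\<forall>h\<in>forms n p. F_op n \<theta> h = (\<lambda>_. 0) \<longrightarrow> form_inner n p f h = 0)"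
proof
  assume "f \<in> F_img n p \<theta>"
  then obtain g where g: "g \<in> forms n p" and f: "f = F_op n \<theta> g"
    unfolding F_img_def by blast
  have "form_inner n p f h = form_inner n p g (F_op n \<theta> h)" for h
    unfolding f by (rule F_op_self_adjoint[of p n \<theta>, OF p sym])
  then have "form_inner n p f h = 0" if "F_op n \<theta> h = (\<lambda>_. 0)" for h
    using that by (simp add: form_inner_def)
  then show "f \<in> forms n p \<and> (\<forall>h\<in>forms n p. F_op n \<theta> h = (\<lambda>_. 0) \<longrightarrow> form_inner n p f h = 0)"
    using F_op_in_forms[OF g p] f by blast
next
  assume "f \<in> forms n p \<and> (\<forall>h\<in>forms n p. F_op n \<theta> h = (\<lambda>_. 0) \<longrightarrow> form_inner n p f h = 0)"
  then obtain g where "g \<in> forms n p" "F_op n \<theta> g = f"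
    using F_op_solvable[of p n \<theta> f, OF p sym] by blast
  then show "f \<in> F_img n p \<theta>"
    unfolding F_img_def by blast
qed

lemma F_op_inj_on_F_img:
  assumes p: "1 \<le> p" and sym: "\<And>i j. i < n \<Longrightarrow> j < n \<Longrightarrow> \<theta> i j = \<theta> j i"
    and g: "g \<in> F_img n p \<theta>" and h: "h \<in> F_img n p \<theta>" and eq: "F_op n \<theta> g = F_op n \<theta> h"
  shows "g = h"
proof -
  define d where "d I = g I - h I" for I
  have forms: "g \<in> forms n p" "h \<in> forms n p" and d: "d \<in> forms n p"
    using g h F_img_iff[of p n \<theta>, OF p sym] forms_diff unfolding d_def by blast+
  have "F_op n \<theta> d = (\<lambda>_. 0)"
    unfolding d_def F_op_diff[OF forms] eq by simp
  then have "form_inner n p d d = 0"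
    using g h d F_img_iff[of p n \<theta>, OF p sym] unfolding d_def form_inner_diff_left by (simp add: d_def[symmetric])
  then have "d I = 0" if "I \<in> idx n p" for I
    using form_inner_self_eq_0 that by blast
  then show ?thesis
    using forms by (intro forms_eqI) (auto simp: d_def)
qed

lemma F_inv_spec:
  assumes p: "1 \<le> p" and sym: "\<And>i j. i < n \<Longrightarrow> j < n \<Longrightarrow> \<theta> i j = \<theta> j i"
    and f: "f \<in> F_img n p \<theta>"
  shows "F_inv n p \<theta> f \<in> F_img n p \<theta>" and "F_op n \<theta> (F_inv n p \<theta> f) = f"
proof -
  obtain g where "g \<in> forms n p" "F_op n \<theta> g = f"
    and "\<And>h. h \<in> forms n p \<Longrightarrow> F_op n \<theta> h = (\<lambda>_. 0) \<Longrightarrow> form_inner n p g h = 0"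
    using F_op_solvable[of p n \<theta> f, OF p sym] f F_img_iff[of p n \<theta>, OF p sym] by blast
  then have g: "g \<in> F_img n p \<theta> \<and> F_op n \<theta> g = f"
    using F_img_iff[of p n \<theta>, OF p sym] by blast
  have "F_inv n p \<theta> f = g"
    unfolding F_inv_def using g F_op_inj_on_F_img[of p n \<theta>, OF p sym] by (intro the_equality) auto
  then show "F_inv n p \<theta> f \<in> F_img n p \<theta>" and "F_op n \<theta> (F_inv n p \<theta> f) = f"
    using g by simp_all
qed

lemma F_op_inner_nonneg:
  assumes "1 \<le> p" "p \<le> n" "\<And>i j. i < n \<Longrightarrow> j < n \<Longrightarrow> \<theta> i j = \<theta> j i"
    and "p_pos_semidef n p (\<lambda>i j. \<theta> i j - \<tau> i * \<tau> j)"
  shows "0 \<le> form_inner n p (F_op n \<theta> g) g"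
  using contract_norm_le_F_op[of p n \<theta> \<tau> g] assms form_inner_nonneg order_trans by blast

lemma wedge1_in_F_img:
  assumes p1: "1 \<le> p" and pn: "p \<le> n" and sym: "\<And>i j. i < n \<Longrightarrow> j < n \<Longrightarrow> \<theta> i j = \<theta> j i"
    and psd: "p_pos_semidef n p (\<lambda>i j. \<theta> i j - \<tau> i * \<tau> j)" and \<xi>: "\<xi> \<in> forms n (p - 1)"
  shows "wedge1 n \<tau> \<xi> \<in> F_img n p \<theta>"
proof -
  have "form_inner n p (wedge1 n \<tau> \<xi>) h = 0" if h: "F_op n \<theta> h = (\<lambda>_. 0)" for h
  proof -
    have "form_inner n (p - 1) (contract n \<tau> h) (contract n \<tau> h) \<le> 0"
      using contract_norm_le_F_op[of p n \<theta> \<tau> h] p1 pn sym psd h by (simp add: form_inner_def)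
    then have "form_inner n (p - 1) (contract n \<tau> h) (contract n \<tau> h) = 0"
      using form_inner_nonneg[of n "p - 1" "contract n \<tau> h"] by linarith
    then show ?thesis
      unfolding wedge1_contract_adjoint[OF p1] by (rule form_inner_eq_0_if_self_eq_0)
  qed
  then show ?thesis
    using wedge1_in_forms[OF \<xi> p1] F_img_iff[of p n \<theta>, OF p1 sym] by blast
qed

lemma F_inv_inner_wedge1_le:
  assumes p1: "1 \<le> p" and pn: "p \<le> n" and sym: "\<And>i j. i < n \<Longrightarrow> j < n \<Longrightarrow> \<theta> i j = \<theta> j i"
    and psd: "p_pos_semidef n p (\<lambda>i j. \<theta> i j - \<tau> i * \<tau> j)" and f: "f \<in> F_img n p \<theta>"
  shows "form_inner n p (F_inv n p \<theta> f) (wedge1 n \<tau> \<xi>)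
           \<le> sqrt (form_inner n p (F_inv n p \<theta> f) f) * form_norm n (p - 1) \<xi>"
proof -
  define h where "h = F_inv n p \<theta> f"
  have Fh: "F_op n \<theta> h = f"
    unfolding h_def by (rule F_inv_spec(2)[of p n \<theta>, OF p1 sym f])
  have "form_inner n p h (wedge1 n \<tau> \<xi>) = form_inner n (p - 1) \<xi> (contract n \<tau> h)"
    unfolding form_inner_commute[of n p h] wedge1_contract_adjoint[OF p1] ..
  also have "\<dots> \<le> sqrt (form_inner n (p - 1) \<xi> \<xi>) * sqrt (form_inner n (p - 1) (contract n \<tau> h) (contract n \<tau> h))"
    by (rule form_inner_Cauchy_Schwarz)
  also have "\<dots> \<le> sqrt (form_inner n (p - 1) \<xi> \<xi>) * sqrt (form_inner n p h f)"
    using contract_norm_le_F_op[of p n \<theta> \<tau> h] p1 pn sym psd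
    by (intro mult_left_mono real_sqrt_le_mono) (auto simp: Fh form_inner_commute[of n p f] form_inner_nonneg)
  finally show ?thesis
    unfolding h_def form_norm_def by (simp add: mult.commute)
qed

lemma le_square_if_le_sqrt_mult:
  fixes q N :: real
  assumes q: "0 \<le> q" and le: "q \<le> sqrt q * N"
  shows "q \<le> N\<^sup>2"
proof (cases "q = 0")
  case False
  then have "0 < sqrt q"
    using q by simp
  moreover have "sqrt q * sqrt q \<le> sqrt q * N"
    using q le by simp
  ultimately have "sqrt q \<le> N"
    by (rule mult_le_cancel_left_pos[THEN iffD1])
  then have "(sqrt q)\<^sup>2 \<le> N\<^sup>2"
    using q by (intro power_mono) simp_all
  then show ?thesis
    using q by simp
qed simp

theorem lemma1p1:
  fixes n p :: nat and \<theta> :: "nat \<Rightarrow> nat \<Rightarrow> real" and \<tau> :: "nat \<Rightarrow> real"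
  assumes "1 \<le> p" and "p \<le> n"
    and sym: "\<And>i j. i < n \<Longrightarrow> j < n \<Longrightarrow> \<theta> i j = \<theta> j i"
    and psd: "p_pos_semidef n p (\<lambda>i j. \<theta> i j - \<tau> i * \<tau> j)"
  shows "\<forall>\<xi>\<in>forms n (p - 1).
           wedge1 n \<tau> \<xi> \<in> F_img n p \<theta>
         \<and> (\<forall>f\<in>F_img n p \<theta>.
              form_inner n p (F_inv n p \<theta> f) (wedge1 n \<tau> \<xi>)
                \<le> sqrt (form_inner n p (F_inv n p \<theta> f) f) * form_norm n (p - 1) \<xi>)
         \<and> form_inner n p (F_inv n p \<theta> (wedge1 n \<tau> \<xi>)) (wedge1 n \<tau> \<xi>)
              \<le> (form_norm n (p - 1) \<xi>)\<^sup>2"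
proof (intro ballI conjI)
  fix \<xi> assume \<xi>: "\<xi> \<in> forms n (p - 1)"
  show img: "wedge1 n \<tau> \<xi> \<in> F_img n p \<theta>"
    using wedge1_in_F_img[of p n \<theta> \<tau> \<xi>] assms \<xi> by blast
  show bound: "form_inner n p (F_inv n p \<theta> f) (wedge1 n \<tau> \<xi>)
      \<le> sqrt (form_inner n p (F_inv n p \<theta> f) f) * form_norm n (p - 1) \<xi>" if "f \<in> F_img n p \<theta>" for f
    using F_inv_inner_wedge1_le[of p n \<theta> \<tau> f \<xi>] assms that by blast
  have "0 \<le> form_inner n p (F_inv n p \<theta> (wedge1 n \<tau> \<xi>)) (wedge1 n \<tau> \<xi>)"
    using F_op_inner_nonneg[of p n \<theta> \<tau> "F_inv n p \<theta> (wedge1 n \<tau> \<xi>)"]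
      F_inv_spec(2)[of p n \<theta>, OF _ sym img] assms
    by (simp add: form_inner_commute)
  then show "form_inner n p (F_inv n p \<theta> (wedge1 n \<tau> \<xi>)) (wedge1 n \<tau> \<xi>) \<le> (form_norm n (p - 1) \<xi>)\<^sup>2"
    using bound[OF img] by (rule le_square_if_le_sqrt_mult)
qed

end
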